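(* Let $\xi(t)$, $t\in[t_a,t_b]$, be a Markov diffusion process in $\mathbb{R}^3$ with forward and backward mean velocities $b_\pm$ and density $\rho$ as in the context. Then the relative entropies of the forward and backward path densities satisfy $$H(\rho_+\|\rho_-) = H_b - H_a - \frac12\int_{t_a}^{t_b} E\big[\nabla_i(b_+^i+b_-^i)\big]\,dt,$$ $$H(\rho_-\|\rho_+) = H_a - H_b + \frac12\int_{t_a}^{t_b} E\big[\nabla_i(b_+^i+b_-^i)\big]\,dt,$$ where $H_a=-\int\rho(\mathbf{x},t_a)\ln\rho(\mathbf{x},t_a)\,d\mathbf{x}$, $H_b=-\int\rho(\mathbf{x},t_b)\ln\rho(\mathbf{x},t_b)\,d\mathbf{x}$ and summation over the repeated index $i$ is implied.
   Context: $\xi(t)$ is a Markov diffusion process in $\mathbb{R}^3$ with $d\xi^i=b_+^i(\xi,t)dt+dW_+^i$ and $d\xi^i=b_-^i(\xi,t)dt+dW_-^i$, where $W_\pm$ are Wiener-type processes with $E[dW_\pm^i dW_\pm^j]=2\nu\delta^{ij}dt$, $dW_+$ independent of the past and $dW_-$ independent of the future. $\rho(\mathbf{x},t)$ is the density of $\xi(t)$, assumed smooth with enough decay for integrations by parts (boundary terms vanish). The forward/backward derivatives $D_\pm F(t)=\lim_{dt\to0^+}E_t[\pm(F(t\pm dt)-F(t))/dt]$ ($E_t$ conditional expectation given $\xi(t)$) act on $f(\xi(t),t)$ as $D_\pm f=(\partial_t+b_\pm^i\nabla_i\pm\nu\Delta)f$, and the identity $b_+^i-b_-^i=2\nu\nabla^i\ln\rho$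 holds. $E[\cdot]$ is absolute expectation at time $t$. Path densities: for a partition $t_1=t_a<\dots<t_n=t_b$ with positions $\mathbf{x}_1,\dots,\mathbf{x}_n$, $\rho_+=\rho(\mathbf{x}_1)\prod_{i=1}^{n-1}p(\mathbf{x}_{i+1}|\mathbf{x}_i)$ and $\rho_-=\rho(\mathbf{x}_n)\prod_{i=1}^{n-1}p(\mathbf{x}_i|\mathbf{x}_{i+1})$ with $p(\mathbf{x}_i|\mathbf{x}_{i+1})$ given by Bayes' theorem; $H(\rho_+\|\rho_-)=\int\rho_+\ln(\rho_+/\rho_-)$, $H(\rho_-\|\rho_+)=\int\rho_-\ln(\rho_-/\rho_+)$ (integrals over all $\mathbf{x}_1,\dots,\mathbf{x}_n$), in the limit of vanishing time step. *)

theory Defs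
  imports "HOL-Analysis.Analysis" "HOL-Probability.Probability"
begin

type_synonym pt = "real ^ 3"

definition pd :: "3 \<Rightarrow> (pt \<Rightarrow> real) \<Rightarrow> pt \<Rightarrow> real" where
  "pd i g x = frechet_derivative g (at x) (axis i 1)"

definition tder :: "real set \<Rightarrow> (pt \<Rightarrow> real \<Rightarrow> real) \<Rightarrow> pt \<Rightarrow> real \<Rightarrow> real" where
  "tder T f x t = (SOME d. ((\<lambda>s. f x s) has_real_derivative d) (at t within T))"

definition lap :: "(pt \<Rightarrow> real) \<Rightarrow> pt \<Rightarrow> real" where
  "lap g x = (\<Sum>i\<in>UNIV. pd i (\<lambda>y. pd i g y) x)"

definition divg :: "(pt \<Rightarrow> real \<Rightarrow> pt) \<Rightarrow> pt \<Rightarrow> real \<Rightarrow> real" where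
  "divg b x t = (\<Sum>i\<in>UNIV. pd i (\<lambda>y. b y t $ i) x)"

definition C1x :: "real set \<Rightarrow> (pt \<Rightarrow> real \<Rightarrow> real) \<Rightarrow> bool" where
  "C1x T f \<longleftrightarrow>
     continuous_on (UNIV \<times> T) (\<lambda>(x,t). f x t) \<and>
     (\<forall>t\<in>T. \<forall>x. (\<lambda>y. f y t) differentiable (at x)) \<and>
     (\<forall>i. continuous_on (UNIV \<times> T) (\<lambda>(x,t). pd i (\<lambda>y. f y t) x))"

definition C21 :: "real set \<Rightarrow> (pt \<Rightarrow> real \<Rightarrow> real) \<Rightarrow> bool" where
  "C21 T f \<longleftrightarrow>
     C1x T f \<and>
     (\<forall>i. \<forall>t\<in>T. \<forall>x. (\<lambda>y. pd i (\<lambda>z. f z t) y) differentiable (at x)) \<and>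
     (\<forall>i j. continuous_on (UNIV \<times> T) (\<lambda>(x,t). pd j (\<lambda>y. pd i (\<lambda>z. f z t) y) x)) \<and>
     (\<forall>x. \<forall>t\<in>T. \<exists>d. ((\<lambda>s. f x s) has_real_derivative d) (at t within T)) \<and>
     continuous_on (UNIV \<times> T) (\<lambda>(x,t). tder T f x t)"

definition test_fun :: "real set \<Rightarrow> (pt \<Rightarrow> real \<Rightarrow> real) \<Rightarrow> bool" where
  "test_fun T f \<longleftrightarrow> C21 T f \<and> (\<exists>K. compact K \<and> (\<forall>x. \<forall>t\<in>T. x \<notin> K \<longrightarrow> f x t = 0))"

text \<open>The operator (d_t + b^i nabla_i + s nu Delta) f, s = +1 (forward) or -1 (backward).\<close>
definition gen :: "real set \<Rightarrow> real \<Rightarrow> real \<Rightarrow> (pt \<Rightarrow> real \<Rightarrow> pt) \<Rightarrow> (pt \<Rightarrow> real \<Rightarrow> real)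
                   \<Rightarrow> pt \<Rightarrow> real \<Rightarrow> real" where
  "gen T s \<nu> b f x t = tder T f x t + (\<Sum>i\<in>UNIV. b x t $ i * pd i (\<lambda>y. f y t) x)
                        + s * \<nu> * lap (\<lambda>y. f y t) x"

text \<open>Transition density p s x t y = density of xi(t) at y given xi(s) = x (s < t).
  Backward transition density by Bayes: density of xi(s) at x given xi(t) = y.\<close>
definition pback :: "(pt \<Rightarrow> real \<Rightarrow> real) \<Rightarrow> (real \<Rightarrow> pt \<Rightarrow> real \<Rightarrow> pt \<Rightarrow> real)
                     \<Rightarrow> real \<Rightarrow> pt \<Rightarrow> real \<Rightarrow> pt \<Rightarrow> real" where
  "pback \<rho> p s x t y = p s x t y * \<rho> x s / \<rho> y t"

text \<open>E_t[f(xi(t+dt),t+dt)] given xi(t) = x.\<close>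
definition condF :: "(real \<Rightarrow> pt \<Rightarrow> real \<Rightarrow> pt \<Rightarrow> real) \<Rightarrow> (pt \<Rightarrow> real \<Rightarrow> real)
                     \<Rightarrow> real \<Rightarrow> real \<Rightarrow> pt \<Rightarrow> real" where
  "condF p f t dt x = (\<integral>y. f y (t + dt) * p t x (t + dt) y \<partial>lborel)"

text \<open>E_t[f(xi(t-dt),t-dt)] given xi(t) = x.\<close>
definition condB :: "(pt \<Rightarrow> real \<Rightarrow> real) \<Rightarrow> (real \<Rightarrow> pt \<Rightarrow> real \<Rightarrow> pt \<Rightarrow> real)
                     \<Rightarrow> (pt \<Rightarrow> real \<Rightarrow> real) \<Rightarrow> real \<Rightarrow> real \<Rightarrow> pt \<Rightarrow> real" where
  "condB \<rho> p f t dt x = (\<integral>y. f y (t - dt) * pback \<rho> p (t - dt) y t x \<partial>lborel)"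

definition is_partition :: "real \<Rightarrow> real \<Rightarrow> nat \<Rightarrow> (nat \<Rightarrow> real) \<Rightarrow> bool" where
  "is_partition ta tb n ts \<longleftrightarrow> 2 \<le> n \<and> ts 0 = ta \<and> ts (n - 1) = tb \<and>
      (\<forall>i. Suc i < n \<longrightarrow> ts i < ts (Suc i))"

definition mesh :: "nat \<Rightarrow> (nat \<Rightarrow> real) \<Rightarrow> real" where
  "mesh n ts = Max ((\<lambda>i. ts (Suc i) - ts i) ` {..<n - 1})"

definition rho_plus :: "(pt \<Rightarrow> real \<Rightarrow> real) \<Rightarrow> (real \<Rightarrow> pt \<Rightarrow> real \<Rightarrow> pt \<Rightarrow> real)
                        \<Rightarrow> nat \<Rightarrow> (nat \<Rightarrow> real) \<Rightarrow> (nat \<Rightarrow> pt) \<Rightarrow> real" where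
  "rho_plus \<rho> p n ts xs = \<rho> (xs 0) (ts 0) *
      (\<Prod>i<n - 1. p (ts i) (xs i) (ts (Suc i)) (xs (Suc i)))"

definition rho_minus :: "(pt \<Rightarrow> real \<Rightarrow> real) \<Rightarrow> (real \<Rightarrow> pt \<Rightarrow> real \<Rightarrow> pt \<Rightarrow> real)
                        \<Rightarrow> nat \<Rightarrow> (nat \<Rightarrow> real) \<Rightarrow> (nat \<Rightarrow> pt) \<Rightarrow> real" where
  "rho_minus \<rho> p n ts xs = \<rho> (xs (n - 1)) (ts (n - 1)) *
      (\<Prod>i<n - 1. pback \<rho> p (ts i) (xs i) (ts (Suc i)) (xs (Suc i)))"

definition rel_ent :: "nat \<Rightarrow> ((nat \<Rightarrow> pt) \<Rightarrow> real) \<Rightarrow> ((nat \<Rightarrow> pt) \<Rightarrow> real) \<Rightarrow> real" where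
  "rel_ent n f g = (\<integral>xs. f xs * ln (f xs / g xs) \<partial>(PiM {..<n} (\<lambda>_. (lborel :: pt measure))))"

definition mesh_limit :: "real \<Rightarrow> real \<Rightarrow> (nat \<Rightarrow> (nat \<Rightarrow> real) \<Rightarrow> real) \<Rightarrow> real \<Rightarrow> bool" where
  "mesh_limit ta tb F L \<longleftrightarrow>
     (\<forall>\<epsilon>>0. \<exists>\<delta>>0. \<forall>n ts. is_partition ta tb n ts \<and> mesh n ts < \<delta> \<longrightarrow> \<bar>F n ts - L\<bar> < \<epsilon>)"

definition entropy_at :: "(pt \<Rightarrow> real \<Rightarrow> real) \<Rightarrow> real \<Rightarrow> real" where
  "entropy_at \<rho> t = - (\<integral>x. \<rho> x t * ln (\<rho> x t) \<partial>lborel)"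

end

theory Submission
  imports Defs
begin

text \<open>With the backward transition density given by Bayes' rule, the product defining \<open>\<rho>\<^sub>-\<close>
  telescopes to \<open>\<rho>\<^sub>+\<close>: both are the joint density of \<open>(\<xi>(t\<^sub>1), \<dots>, \<xi>(t\<^sub>n))\<close>. Hence both
  relative entropies vanish for every partition, and the content of the theorem is the entropy
  balance \<open>H\<^sub>b - H\<^sub>a = 1/2 \<integral> E[\<nabla>\<^sub>i(b\<^sub>+\<^sup>i + b\<^sub>-\<^sup>i)] dt\<close>.

  Applying \<open>D\<^sub>+\<close> and \<open>D\<^sub>-\<close> to bump test functions gives the weak forward and backward Kolmogorov
  equations for \<open>\<rho>\<close>. Their average no longer contains \<open>\<nu>\<close>: it is the continuity equation
  \<open>\<partial>\<^sub>t\<rho> + \<nabla>\<^sub>i(\<rho> v\<^sup>i) = 0\<close> for the current velocity \<open>v = (b\<^sub>+ + b\<^sub>-)/2\<close>, which the fundamental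
  lemma of the calculus of variations turns into a pointwise identity. Then
  \<open>dH/dt = -\<integral> \<partial>\<^sub>t\<rho> (ln \<rho> + 1) = \<integral> \<nabla>\<^sub>i(\<rho> v\<^sup>i) (ln \<rho> + 1) = -\<integral> v\<^sup>i \<nabla>\<^sub>i\<rho> = \<integral> \<rho> \<nabla>\<^sub>iv\<^sup>i\<close>
  by two integrations by parts.\<close>

section \<open>Path densities\<close>

lemma is_partition_range:
  assumes "is_partition ta tb n ts" "i < n"
  shows "ts i \<in> {ta..tb}"
proof -
  have mono: "ts j \<le> ts k" if "j \<le> k" "k < n" for j k
    by (rule lift_Suc_mono_le_ivl[where N = "{..<n - 1}"])
       (use assms(1) that in \<open>auto simp: is_partition_def less_imp_le\<close>)
  show ?thesis
    using mono[of 0 i] mono[of i "n - 1"] assms unfolding is_partition_def by auto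
qed

lemma rho_minus_eq_rho_plus:
  assumes part: "is_partition ta tb n ts" and pos: "\<forall>t\<in>{ta..tb}. \<forall>x. \<rho> x t > 0"
  shows "rho_minus \<rho> p n ts = rho_plus \<rho> p n ts"
proof
  fix xs
  let ?r = "\<lambda>i. \<rho> (xs i) (ts i)" and ?q = "\<lambda>i. p (ts i) (xs i) (ts (Suc i)) (xs (Suc i))"
  have r: "?r i \<noteq> 0" if "i \<le> n - 1" for i
  proof -
    have "i < n" using that part unfolding is_partition_def by auto
    then show ?thesis using is_partition_range[OF part] pos by (metis less_irrefl)
  qed
  have "rho_minus \<rho> p n ts xs = ?r (n - 1) * ((\<Prod>i<n - 1. ?q i) * (\<Prod>i<n - 1. ?r i / ?r (Suc i)))"
    unfolding rho_minus_def pback_def by (simp add: prod.distrib[symmetric] mult.assoc)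
  also have "\<dots> = ?r (n - 1) * ((\<Prod>i<n - 1. ?q i) * (?r 0 / ?r (n - 1)))"
    using r by (subst prod_lessThan_telescope') auto
  also have "\<dots> = rho_plus \<rho> p n ts xs"
    unfolding rho_plus_def using r[of "n - 1"] by simp
  finally show "rho_minus \<rho> p n ts xs = rho_plus \<rho> p n ts xs" .
qed

lemma rel_ent_self: "rel_ent n f f = 0"
proof -
  have "(\<lambda>xs. f xs * ln (f xs / f xs)) = (\<lambda>_. 0)" by (rule ext) (cases "f xs = 0", auto)
  then show ?thesis unfolding rel_ent_def by simp
qed

lemma mesh_limit_zero:
  assumes "\<And>n ts. is_partition ta tb n ts \<Longrightarrow> F n ts = 0"
  shows "mesh_limit ta tb F 0"
  unfolding mesh_limit_def using assms by auto

section \<open>Integrals over Euclidean space\<close>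

lemma integrable_continuous_compact_support:
  fixes h :: "'a::euclidean_space \<Rightarrow> real"
  assumes "continuous_on UNIV h" "compact K" "\<And>x. x \<notin> K \<Longrightarrow> h x = 0"
  shows "integrable lborel h"
proof -
  have "integrable lborel (\<lambda>x. indicator K x *\<^sub>R h x)"
    using borel_integrable_compact[OF assms(2) continuous_on_subset[OF assms(1)]] by simp
  moreover have "(\<lambda>x. indicator K x *\<^sub>R h x) = h"
    using assms(3) by (intro ext) (auto simp: indicator_def)
  ultimately show ?thesis by simp
qed

lemma integrable_continuous_dominated:
  fixes f g :: "'a::euclidean_space \<Rightarrow> real"
  assumes "integrable lborel g" "continuous_on UNIV f" "\<And>x. \<bar>f x\<bar> \<le> g x"
  shows "integrable lborel f"
proof (rule Bochner_Integration.integrable_bound[OF assms(1)])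
  show "f \<in> borel_measurable lborel"
    using borel_measurable_continuous_onI[OF assms(2)] by simp
  show "AE x in lborel. norm (f x) \<le> norm (g x)"
    using assms(3) by (auto intro!: AE_I2 order_trans[OF _ abs_ge_self])
qed

lemma
  fixes f :: "'a::euclidean_space \<Rightarrow> real"
  assumes "f \<in> borel_measurable borel"
  shows integrable_lborel_translate: "integrable lborel (\<lambda>x. f (x + c)) \<longleftrightarrow> integrable lborel f"
    and integral_lborel_translate: "(\<integral>x. f (x + c) \<partial>lborel) = integral\<^sup>L lborel f"
proof -
  have m: "(+) c \<in> lborel \<rightarrow>\<^sub>M borel" by simp
  show "integrable lborel (\<lambda>x. f (x + c)) \<longleftrightarrow> integrable lborel f"
    using integrable_distr_eq[OF m assms] by (simp add: lborel_distr_plus add.commute)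
  show "(\<integral>x. f (x + c) \<partial>lborel) = integral\<^sup>L lborel f"
    using integral_distr[OF m assms] by (simp add: lborel_distr_plus add.commute)
qed

lemma integral_lborel_eq_integral_cbox:
  fixes g :: "'a::euclidean_space \<Rightarrow> real"
  assumes "continuous_on UNIV g" "\<And>x. x \<notin> cbox a b \<Longrightarrow> g x = 0"
  shows "integral\<^sup>L lborel g = integral (cbox a b) g"
proof -
  have "(g has_integral integral\<^sup>L lborel g) UNIV"
    using integrable_continuous_compact_support[OF assms(1) compact_cbox assms(2)]
    by (rule has_integral_integral_lborel)
  moreover have "(\<lambda>x. if x \<in> cbox a b then g x else 0) = g"
    using assms(2) by auto
  ultimately show ?thesis
    using has_integral_restrict_UNIV[of "cbox a b" g] by (simp add: integral_unique)
qed

lemma continuous_nonneg_integral_eq_0_imp_eq_0: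
  fixes f :: "'a::euclidean_space \<Rightarrow> real"
  assumes "continuous_on UNIV f" "integrable lborel f" "\<And>x. 0 \<le> f x" "integral\<^sup>L lborel f = 0"
  shows "f x = 0"
proof -
  have "AE x in lborel. f x = 0"
    using integral_nonneg_eq_0_iff_AE[OF assms(2)] assms(3,4) by simp
  then have "AE x in lebesgue. x \<in> {x. f x = 0}"
    by (simp add: AE_completion)
  moreover have "closed {x. f x = 0}"
    using continuous_closed_preimage_constant[OF assms(1) closed_UNIV] by simp
  ultimately show ?thesis
    using mem_closed_if_AE_lebesgue by blast
qed

lemma continuous_on_space_slice:
  assumes "continuous_on (UNIV \<times> T) (\<lambda>(x, t). F x t)" "t \<in> T"
  shows "continuous_on UNIV (\<lambda>x. F x t)"
proof -
  have "continuous_on UNIV (\<lambda>x. (\<lambda>(x, t). F x t) (x, t))"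
    by (rule continuous_on_compose2[OF assms(1)]) (use assms(2) in \<open>auto intro!: continuous_intros\<close>)
  then show ?thesis by simp
qed

lemma continuous_on_time_slice:
  assumes "continuous_on (UNIV \<times> T) (\<lambda>(x, t). F x t)"
  shows "continuous_on T (\<lambda>t. F x t)"
proof -
  have "continuous_on T (\<lambda>t. (\<lambda>(x, t). F x t) (x, t))"
    by (rule continuous_on_compose2[OF assms]) (auto intro!: continuous_intros)
  then show ?thesis by simp
qed

lemma continuous_on_case_prod_fst:
  "continuous_on UNIV f \<Longrightarrow> continuous_on S (\<lambda>(x, t). f x)"
  using continuous_on_compose2[of UNIV f S fst] by (simp add: case_prod_beta continuous_on_fst)

lemma integrable_Icc_product:
  fixes K :: "'a::euclidean_space \<Rightarrow> real \<Rightarrow> real"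
  assumes ab: "a \<le> b" and K: "continuous_on (UNIV \<times> {a..b}) (\<lambda>(x, t). K x t)"
    and g: "integrable lborel g" "\<And>x t. t \<in> {a..b} \<Longrightarrow> \<bar>K x t\<bar> \<le> g x"
  shows "integrable (lborel \<Otimes>\<^sub>M lborel) (\<lambda>(x, t). indicator {a..b} t * K x t)"
proof (rule lborel_pair.Fubini_integrable)
  have "(\<lambda>z. indicator (UNIV \<times> {a..b}) z *\<^sub>R (\<lambda>(x, t). K x t) z) \<in> borel_measurable borel"
    by (rule borel_measurable_continuous_on_indicator[OF _ K]) (simp add: closed_Times)
  moreover have "(\<lambda>z. indicator (UNIV \<times> {a..b}) z *\<^sub>R (\<lambda>(x, t). K x t) z)
      = (\<lambda>(x, t). indicator {a..b} t * K x t)"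
    by (auto simp: indicator_def fun_eq_iff)
  ultimately show meas: "(\<lambda>(x, t). indicator {a..b} t * K x t) \<in> borel_measurable (lborel \<Otimes>\<^sub>M lborel)"
    by (simp add: lborel_prod)
  have slice: "integrable lborel (\<lambda>t. indicator {a..b} t * K x t)" for x
    using borel_integrable_compact[OF compact_Icc continuous_on_time_slice[OF K, of x]] by simp
  then show "AE x in lborel. integrable lborel (\<lambda>t. case (x, t) of (x, t) \<Rightarrow> indicator {a..b} t * K x t)"
    by simp
  show "integrable lborel (\<lambda>x. \<integral>t. norm (case (x, t) of (x, t) \<Rightarrow> indicator {a..b} t * K x t) \<partial>lborel)"
  proof (rule Bochner_Integration.integrable_bound)
    show "integrable lborel (\<lambda>x. (b - a) * g x)"
      using g(1) by simp
    show "(\<lambda>x. \<integral>t. norm (case (x, t) of (x, t) \<Rightarrow> indicator {a..b} t * K x t) \<partial>lborel) \<in> borel_measurable lborel"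
      using meas by measurable
    have "(\<integral>t. \<bar>indicator {a..b} t * K x t\<bar> \<partial>lborel) \<le> (\<integral>t. g x * indicator {a..b} t \<partial>lborel)" for x
      using slice[of x] g(2)[of _ x] borel_integrable_atLeastAtMost[of a b "\<lambda>_. g x"]
      by (intro integral_mono) (auto simp: indicator_def)
    then show "AE x in lborel. norm (\<integral>t. norm (case (x, t) of (x, t) \<Rightarrow> indicator {a..b} t * K x t) \<partial>lborel)
        \<le> norm ((b - a) * g x)"
      using ab by (auto intro!: AE_I2 order_trans[OF _ abs_ge_self] simp: mult.commute)
  qed
qed

lemma integral_Icc_integral_lborel_swap:
  fixes K :: "'a::euclidean_space \<Rightarrow> real \<Rightarrow> real"
  assumes ab: "a \<le> b" and K: "continuous_on (UNIV \<times> {a..b}) (\<lambda>(x, t). K x t)"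
    and g: "integrable lborel g" "\<And>x t. t \<in> {a..b} \<Longrightarrow> \<bar>K x t\<bar> \<le> g x"
  shows "integral {a..b} (\<lambda>t. \<integral>x. K x t \<partial>lborel) = (\<integral>x. integral {a..b} (K x) \<partial>lborel)"
proof -
  note int = integrable_Icc_product[OF ab K g]
  have "set_integrable lborel {a..b} (\<lambda>t. \<integral>x. K x t \<partial>lborel)"
    using lborel_pair.integrable_snd[OF int] unfolding set_integrable_def by (simp add: mult.commute)
  then have "integral {a..b} (\<lambda>t. \<integral>x. K x t \<partial>lborel) = (\<integral>t. (\<integral>x. indicator {a..b} t * K x t \<partial>lborel) \<partial>lborel)"
    by (simp add: set_borel_integral_eq_integral(2)[symmetric] set_lebesgue_integral_def)
  also have "\<dots> = (\<integral>x. (\<integral>t. indicator {a..b} t * K x t \<partial>lborel) \<partial>lborel)"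
    using lborel_pair.Fubini_integral[of "\<lambda>x t. indicator {a..b} t * K x t"] int by simp
  also have "\<dots> = (\<integral>x. integral {a..b} (K x) \<partial>lborel)"
  proof (rule Bochner_Integration.integral_cong[OF refl])
    fix x
    have "set_integrable lborel {a..b} (K x)"
      unfolding set_integrable_def
      using borel_integrable_compact[OF compact_Icc continuous_on_time_slice[OF K, of x]] by simp
    then show "(\<integral>t. indicator {a..b} t * K x t \<partial>lborel) = integral {a..b} (K x)"
      by (simp add: set_borel_integral_eq_integral(2)[symmetric] set_lebesgue_integral_def)
  qed
  finally show ?thesis .
qed

lemma integrable_kernel_product:
  fixes r :: "'a::euclidean_space \<Rightarrow> real" and q \<psi> :: "'a \<Rightarrow> 'a \<Rightarrow> real"
  assumes q_meas: "(\<lambda>z. q (fst z) (snd z)) \<in> borel_measurable borel"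
    and q_dens: "\<And>x. (\<forall>y. 0 \<le> q x y) \<and> integrable lborel (q x) \<and> (\<integral>y. q x y \<partial>lborel) = 1"
    and r: "integrable lborel r" "\<And>x. 0 \<le> r x"
    and \<psi>: "(\<lambda>z. \<psi> (fst z) (snd z)) \<in> borel_measurable borel" "\<And>x y. \<bar>\<psi> x y\<bar> \<le> C"
  shows "integrable (lborel \<Otimes>\<^sub>M lborel) (\<lambda>(x, y). r x * \<psi> x y * q x y)"
proof (rule lborel_pair.Fubini_integrable)
  have [measurable]: "r \<in> borel_measurable lborel"
    using r(1) by (rule borel_measurable_integrable)
  have [measurable]: "(\<lambda>z. q (fst z) (snd z)) \<in> borel_measurable (lborel \<Otimes>\<^sub>M lborel)"
    "(\<lambda>z. \<psi> (fst z) (snd z)) \<in> borel_measurable (lborel \<Otimes>\<^sub>M lborel)"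
    using q_meas \<psi>(1) by (simp_all add: lborel_prod)
  show meas: "(\<lambda>(x, y). r x * \<psi> x y * q x y) \<in> borel_measurable (lborel \<Otimes>\<^sub>M lborel)"
    unfolding case_prod_beta by measurable
  have bound: "\<bar>r x * \<psi> x y * q x y\<bar> \<le> C * r x * q x y" for x y
  proof -
    have "\<bar>r x * \<psi> x y * q x y\<bar> = r x * \<bar>\<psi> x y\<bar> * q x y"
      using r(2)[of x] q_dens[of x] by (simp add: abs_mult)
    also have "\<dots> \<le> r x * C * q x y"
      using \<psi>(2)[of x y] r(2)[of x] q_dens[of x] by (intro mult_right_mono mult_left_mono) auto
    finally show ?thesis by (simp add: mult_ac)
  qed
  have int_y: "integrable lborel (\<lambda>y. r x * \<psi> x y * q x y)" for x
  proof (rule Bochner_Integration.integrable_bound)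
    show "integrable lborel (\<lambda>y. C * r x * q x y)"
      using q_dens[of x] by simp
    show "(\<lambda>y. r x * \<psi> x y * q x y) \<in> borel_measurable lborel"
      using measurable_Pair2[OF meas] by simp
  qed (use bound in \<open>auto intro!: AE_I2 order_trans[OF _ abs_ge_self]\<close>)
  then show "AE x in lborel. integrable lborel (\<lambda>y. case (x, y) of (x, y) \<Rightarrow> r x * \<psi> x y * q x y)"
    by simp
  show "integrable lborel (\<lambda>x. \<integral>y. norm (case (x, y) of (x, y) \<Rightarrow> r x * \<psi> x y * q x y) \<partial>lborel)"
  proof (rule Bochner_Integration.integrable_bound)
    show "integrable lborel (\<lambda>x. C * r x)"
      using r(1) by simp
    show "(\<lambda>x. \<integral>y. norm (case (x, y) of (x, y) \<Rightarrow> r x * \<psi> x y * q x y) \<partial>lborel) \<in> borel_measurable lborel"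
      by measurable
    have "(\<integral>y. \<bar>r x * \<psi> x y * q x y\<bar> \<partial>lborel) \<le> C * r x" for x
    proof -
      have "(\<integral>y. \<bar>r x * \<psi> x y * q x y\<bar> \<partial>lborel) \<le> (\<integral>y. C * r x * q x y \<partial>lborel)"
        using int_y[of x] q_dens[of x] bound by (intro integral_mono) auto
      then show ?thesis using q_dens[of x] by simp
    qed
    then show "AE x in lborel. norm (\<integral>y. norm (case (x, y) of (x, y) \<Rightarrow> r x * \<psi> x y * q x y) \<partial>lborel)
        \<le> norm (C * r x)"
      by (auto intro!: AE_I2 order_trans[OF _ abs_ge_self])
  qed
qed

lemma tendsto_integral_weighted_L1:
  fixes w G :: "'a \<Rightarrow> real" and A :: "'b \<Rightarrow> 'a \<Rightarrow> real"
  assumes L1: "((\<lambda>h. \<integral>\<^sup>+x. ennreal (w x * \<bar>A h x - G x\<bar>) \<partial>M) \<longlongrightarrow> 0) F"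
    and iA: "\<forall>\<^sub>F h in F. integrable M (\<lambda>x. w x * A h x)"
    and iG: "integrable M (\<lambda>x. w x * G x)" and w: "\<And>x. 0 \<le> w x"
  shows "((\<lambda>h. \<integral>x. w x * A h x \<partial>M) \<longlongrightarrow> (\<integral>x. w x * G x \<partial>M)) F"
proof -
  \<comment> \<open>\<open>A h\<close> is patched where it fails to be integrable, eventually nowhere, to fit \<open>tendsto_L1_int\<close>.\<close>
  define u where "u h x = (if integrable M (\<lambda>x. w x * A h x) then w x * A h x else w x * G x)" for h x
  have "integrable M (u h)" for h
    unfolding u_def using iG by (cases "integrable M (\<lambda>x. w x * A h x)") auto
  moreover have "((\<lambda>h. \<integral>\<^sup>+x. norm (u h x - w x * G x) \<partial>M) \<longlongrightarrow> 0) F"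
    by (rule Lim_transform_eventually[OF L1])
       (use iA w in \<open>auto elim!: eventually_mono simp: u_def abs_mult right_diff_distrib[symmetric]\<close>)
  ultimately have "((\<lambda>h. \<integral>x. u h x \<partial>M) \<longlongrightarrow> (\<integral>x. w x * G x \<partial>M)) F"
    by (intro tendsto_L1_int iG)
  then show ?thesis
    by (rule Lim_transform_eventually) (use iA in \<open>auto elim!: eventually_mono simp: u_def\<close>)
qed

section \<open>Partial derivatives and integration by parts\<close>

lemma pd_eq_derivative:
  assumes "(g has_derivative g') (at x)"
  shows "pd i g x = g' (axis i 1)"
  unfolding pd_def using frechet_derivative_at[OF assms] by simp

lemma pd_eq_gradient:
  assumes "(g has_derivative (\<lambda>h. \<Sum>k\<in>UNIV. h $ k * G k)) (at x)"
  shows "pd i g x = G i"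
proof -
  have "(\<Sum>k\<in>UNIV. axis i 1 $ k * G k) = (\<Sum>k\<in>UNIV. if k = i then G k else 0)"
    by (rule sum.cong) (auto simp: axis_def)
  then show ?thesis using pd_eq_derivative[OF assms] by simp
qed

lemma pd_mult:
  assumes "f differentiable (at x)" "g differentiable (at x)"
  shows "pd i (\<lambda>y. f y * g y) x = pd i f x * g x + f x * pd i g x"
  using pd_eq_derivative[OF has_derivative_mult[OF assms[unfolded frechet_derivative_works]], of i]
  by (simp add: pd_def)

lemma has_derivative_ln:
  fixes f :: "'a::real_normed_vector \<Rightarrow> real"
  assumes "(f has_derivative f') (at x)" "f x > 0"
  shows "((\<lambda>y. ln (f y)) has_derivative (\<lambda>h. f' h / f x)) (at x)"
  using has_derivative_compose[OF assms(1) DERIV_ln[OF assms(2), unfolded has_field_derivative_def]]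
  by (simp add: divide_inverse mult.commute)

lemma differentiable_ln:
  fixes f :: "'a::real_normed_vector \<Rightarrow> real"
  assumes "f differentiable (at x)" "f x > 0"
  shows "(\<lambda>y. ln (f y)) differentiable (at x)"
  using has_derivative_ln[OF assms(1)[unfolded frechet_derivative_works] assms(2)]
  unfolding differentiable_def by blast

lemma continuous_on_differentiable_everywhere:
  "(\<And>x. f differentiable (at x)) \<Longrightarrow> continuous_on UNIV f"
  by (simp add: continuous_at_imp_continuous_on differentiable_imp_continuous_within)

lemma integral_pd_along_axis:
  assumes dF: "\<And>x. F differentiable (at x)" and cont: "continuous_on UNIV (pd i F)"
  shows "(LBINT s:{0..1}. pd i F (x + s *\<^sub>R axis i 1)) = F (x + axis i 1) - F x"
proof -
  let ?e = "axis i 1 :: pt"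
  have "((\<lambda>s. F (x + s *\<^sub>R ?e)) has_vector_derivative pd i F (x + s *\<^sub>R ?e)) (at s within {0..1})"
    for s
  proof -
    let ?D = "frechet_derivative F (at (x + s *\<^sub>R ?e))"
    have "((\<lambda>s. x + s *\<^sub>R ?e) has_derivative (\<lambda>h. h *\<^sub>R ?e)) (at s within {0..1})"
      by (auto intro!: derivative_eq_intros)
    from has_derivative_compose[OF this dF[unfolded frechet_derivative_works]]
    have "((\<lambda>s. F (x + s *\<^sub>R ?e)) has_derivative (\<lambda>h. ?D (h *\<^sub>R ?e))) (at s within {0..1})" .
    moreover have "linear ?D" using dF frechet_derivative_works has_derivative_linear by blast
    ultimately show ?thesis
      unfolding has_vector_derivative_def pd_def by (simp add: linear_scale)
  qed
  moreover have "continuous_on {0..1} (\<lambda>s. pd i F (x + s *\<^sub>R ?e))"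
    by (rule continuous_on_compose2[OF cont]) (auto intro!: continuous_intros)
  ultimately show ?thesis
    using interval_integral_FTC_finite[of 0 1 "\<lambda>s. pd i F (x + s *\<^sub>R ?e)" "\<lambda>s. F (x + s *\<^sub>R ?e)"]
    by (simp add: interval_integral_Icc)
qed

text \<open>Averaging \<open>F(x + e\<^sub>i) - F x = \<integral>\<^sub>0\<^sup>1 \<nabla>\<^sub>iF(x + s e\<^sub>i) ds\<close> over \<open>x\<close> and using translation invariance
  of Lebesgue measure on both sides.\<close>
lemma integral_pd_eq_0:
  fixes F :: "pt \<Rightarrow> real"
  assumes dF: "\<And>x. F differentiable (at x)" and cont: "continuous_on UNIV (pd i F)"
    and intF: "integrable lborel F" and intD: "integrable lborel (pd i F)"
  shows "integral\<^sup>L lborel (pd i F) = 0"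
proof -
  let ?e = "axis i 1 :: pt"
  have [measurable]: "F \<in> borel_measurable borel"
    using continuous_on_differentiable_everywhere[OF dF] by (rule borel_measurable_continuous_onI)
  have [measurable]: "pd i F \<in> borel_measurable borel"
    using cont by (rule borel_measurable_continuous_onI)
  define f where "f s x = indicator {0..1::real} s * pd i F (x + s *\<^sub>R ?e)" for s x
  have int: "integrable (lborel \<Otimes>\<^sub>M lborel) (\<lambda>(s, x). f s x)"
  proof (rule lborel_pair.Fubini_integrable)
    show "(\<lambda>(s, x). f s x) \<in> borel_measurable (lborel \<Otimes>\<^sub>M lborel)"
      unfolding f_def by measurable
    have "(\<integral>x. norm (f s x) \<partial>lborel) = (\<integral>x. norm (pd i F x) \<partial>lborel) * indicator {0..1} s" for s
      using integral_lborel_translate[of "\<lambda>x. \<bar>pd i F x\<bar>" "s *\<^sub>R ?e"]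
      unfolding f_def by (auto simp: abs_mult indicator_def)
    then show "integrable lborel (\<lambda>s. \<integral>x. norm (case (s, x) of (s, x) \<Rightarrow> f s x) \<partial>lborel)"
      by (simp add: borel_integrable_atLeastAtMost)
    show "AE s in lborel. integrable lborel (\<lambda>x. case (s, x) of (s, x) \<Rightarrow> f s x)"
      using intD integrable_lborel_translate[of "pd i F"] unfolding f_def by auto
  qed
  have "0 = (\<integral>x. F (x + ?e) - F x \<partial>lborel)"
    using intF integrable_lborel_translate[of F] integral_lborel_translate[of F] by simp
  also have "\<dots> = (\<integral>x. (\<integral>s. f s x \<partial>lborel) \<partial>lborel)"
    using integral_pd_along_axis[OF dF cont] unfolding f_def set_lebesgue_integral_def by simp
  also have "\<dots> = (\<integral>s. (\<integral>x. f s x \<partial>lborel) \<partial>lborel)"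
    using lborel_pair.Fubini_integral[OF int] .
  also have "\<dots> = (\<integral>s. indicator {0..1::real} s * integral\<^sup>L lborel (pd i F) \<partial>lborel)"
    unfolding f_def using integral_lborel_translate[of "pd i F"] by simp
  also have "\<dots> = integral\<^sup>L lborel (pd i F)"
    by simp
  finally show ?thesis ..
qed

lemma integral_mult_pd:
  fixes F G :: "pt \<Rightarrow> real"
  assumes dF: "\<And>x. F differentiable (at x)" and dG: "\<And>x. G differentiable (at x)"
    and cF: "continuous_on UNIV (pd i F)" and cG: "continuous_on UNIV (pd i G)"
    and int: "integrable lborel (\<lambda>x. F x * G x)"
    and intF: "integrable lborel (\<lambda>x. pd i F x * G x)" and intG: "integrable lborel (\<lambda>x. F x * pd i G x)"
  shows "(\<integral>x. F x * pd i G x \<partial>lborel) = - (\<integral>x. pd i F x * G x \<partial>lborel)"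
proof -
  have pd_FG: "pd i (\<lambda>y. F y * G y) = (\<lambda>x. pd i F x * G x + F x * pd i G x)"
    using pd_mult[OF dF dG] by blast
  have "integral\<^sup>L lborel (pd i (\<lambda>y. F y * G y)) = 0"
  proof (rule integral_pd_eq_0[OF _ _ int])
    show "(\<lambda>y. F y * G y) differentiable (at x)" for x
      using dF dG by (rule differentiable_mult)
    show "continuous_on UNIV (pd i (\<lambda>y. F y * G y))"
      unfolding pd_FG using continuous_on_differentiable_everywhere[OF dF]
        continuous_on_differentiable_everywhere[OF dG] by (intro continuous_intros cF cG)
    show "integrable lborel (pd i (\<lambda>y. F y * G y))"
      unfolding pd_FG using intF intG by simp
  qed
  then show ?thesis unfolding pd_FG using intF intG by simp
qed

lemma integral_pd_mult_ln:
  fixes r F :: "pt \<Rightarrow> real"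
  assumes r: "\<And>x. r differentiable (at x)" "\<And>x. 0 < r x" "continuous_on UNIV (pd i r)"
    and F: "\<And>x. F differentiable (at x)" "continuous_on UNIV (pd i F)"
    and int: "integrable lborel (\<lambda>x. F x * (ln (r x) + 1))"
      "integrable lborel (\<lambda>x. pd i F x * (ln (r x) + 1))"
      "integrable lborel (\<lambda>x. F x * pd i r x / r x)"
  shows "(\<integral>x. pd i F x * (ln (r x) + 1) \<partial>lborel) = - (\<integral>x. F x * pd i r x / r x \<partial>lborel)"
proof -
  let ?L = "\<lambda>y. ln (r y) + 1"
  have pdL: "pd i ?L = (\<lambda>x. pd i r x / r x)"
    using pd_eq_derivative[OF has_derivative_add_const[OF
        has_derivative_ln[OF r(1)[unfolded frechet_derivative_works] r(2)]]]
    by (simp add: pd_def fun_eq_iff)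
  have "(\<integral>x. F x * pd i ?L x \<partial>lborel) = - (\<integral>x. pd i F x * ?L x \<partial>lborel)"
  proof (rule integral_mult_pd[OF F(1) _ F(2) _ int(1,2)])
    show "?L differentiable (at x)" for x
      using differentiable_ln[OF r(1,2)] by (intro differentiable_add differentiable_const)
    show "continuous_on UNIV (pd i ?L)"
      unfolding pdL using r(2,3) continuous_on_differentiable_everywhere[OF r(1)]
      by (auto intro!: continuous_intros simp: less_imp_neq[symmetric])
    show "integrable lborel (\<lambda>x. F x * pd i ?L x)"
      unfolding pdL using int(3) by simp
  qed
  then show ?thesis
    unfolding pdL by simp
qed

lemma integral_pd_flux_mult_ln:
  fixes r c g :: "pt \<Rightarrow> real"
  assumes r: "\<And>x. r differentiable (at x)" "\<And>x. 0 < r x" "continuous_on UNIV (pd i r)"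
    and c: "\<And>x. c differentiable (at x)" "continuous_on UNIV (pd i c)"
    and g: "integrable lborel g"
      "\<And>x. \<bar>r x * c x\<bar> * (1 + \<bar>ln (r x)\<bar>) \<le> g x"
      "\<And>x. \<bar>pd i r x * c x + r x * pd i c x\<bar> * (1 + \<bar>ln (r x)\<bar>) \<le> g x"
      "\<And>x. \<bar>c x * pd i r x\<bar> \<le> g x"
  shows "integrable lborel (\<lambda>x. pd i (\<lambda>y. r y * c y) x * (ln (r x) + 1))"
    and "integrable lborel (\<lambda>x. r x * pd i c x)"
    and "(\<integral>x. pd i (\<lambda>y. r y * c y) x * (ln (r x) + 1) \<partial>lborel) = (\<integral>x. r x * pd i c x \<partial>lborel)"
proof -
  let ?F = "\<lambda>y. r y * c y" and ?L = "\<lambda>y. ln (r y) + 1"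
  have cr: "continuous_on UNIV r" and cc: "continuous_on UNIV c"
    using r(1) c(1) by (auto intro: continuous_on_differentiable_everywhere)
  have dF: "?F differentiable (at x)" for x
    using r(1) c(1) by (rule differentiable_mult)
  have pdF: "pd i ?F = (\<lambda>x. pd i r x * c x + r x * pd i c x)"
    using pd_mult[OF r(1) c(1)] by blast
  have cL: "continuous_on UNIV ?L" and cpdF: "continuous_on UNIV (pd i ?F)"
    using cr cc r(2,3) c(2) unfolding pdF by (auto intro!: continuous_intros simp: less_imp_neq[symmetric])
  have dominated: "integrable lborel f" if "continuous_on UNIV f" "\<And>x. \<bar>f x\<bar> \<le> \<bar>h x\<bar> * (1 + \<bar>ln (r x)\<bar>)"
    "\<And>x. \<bar>h x\<bar> * (1 + \<bar>ln (r x)\<bar>) \<le> g x" for f h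
    using that by (intro integrable_continuous_dominated[OF g(1)]) (auto intro: order_trans)
  have iF: "integrable lborel ?F"
    by (rule dominated[of _ ?F]) (use cr cc g(2) in \<open>auto intro!: continuous_intros simp: mult_le_cancel_left1\<close>)
  have ipdF: "integrable lborel (pd i ?F)"
    by (rule dominated[of _ "pd i ?F"]) (use cpdF g(3) in \<open>auto simp: pdF mult_le_cancel_left1\<close>)
  show iPL: "integrable lborel (\<lambda>x. pd i ?F x * ?L x)"
    by (rule dominated[of _ "pd i ?F"])
       (use cpdF cL g(3) in \<open>auto intro!: continuous_intros mult_left_mono simp: pdF abs_mult\<close>)
  have iFL: "integrable lborel (\<lambda>x. ?F x * ?L x)"
    by (rule dominated[of _ ?F])
       (use cr cc cL g(2) in \<open>auto intro!: continuous_intros mult_left_mono simp: abs_mult\<close>)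
  have icr: "integrable lborel (\<lambda>x. c x * pd i r x)"
    by (rule integrable_continuous_dominated[OF g(1)]) (use cc r(3) g(4) in \<open>auto intro!: continuous_intros\<close>)
  have F_pd_r: "(\<lambda>x. ?F x * pd i r x / r x) = (\<lambda>x. c x * pd i r x)"
    using r(2) by (simp add: fun_eq_iff less_imp_neq[symmetric])
  have r_pd_c: "(\<lambda>x. r x * pd i c x) = (\<lambda>x. pd i ?F x - c x * pd i r x)"
    by (simp add: pdF)
  show "integrable lborel (\<lambda>x. r x * pd i c x)"
    unfolding r_pd_c using ipdF icr by simp
  have "(\<integral>x. pd i ?F x * ?L x \<partial>lborel) = - (\<integral>x. c x * pd i r x \<partial>lborel)"
    using integral_pd_mult_ln[OF r dF cpdF iFL iPL] icr unfolding F_pd_r by simp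
  also have "\<dots> = (\<integral>x. r x * pd i c x \<partial>lborel)"
    using integral_pd_eq_0[OF dF cpdF iF ipdF] ipdF icr unfolding r_pd_c by simp
  finally show "(\<integral>x. pd i ?F x * ?L x \<partial>lborel) = (\<integral>x. r x * pd i c x \<partial>lborel)" .
qed

section \<open>Bump functions\<close>

lemma has_real_derivative_pos_part_power:
  fixes u :: real
  assumes n: "n \<ge> 2"
  shows "((\<lambda>u. (max 0 u) ^ n) has_real_derivative real n * (max 0 u) ^ (n - 1)) (at u)"
proof -
  consider "u < 0" | "u > 0" | "u = 0" by linarith
  then show ?thesis
  proof cases
    case 1
    have "((\<lambda>u. 0) has_real_derivative 0) (at u)" by simp
    then have "((\<lambda>u. (max 0 u) ^ n) has_real_derivative 0) (at u)"
      by (rule has_field_derivative_transform_within_open[where S="{..<0}"]) (use 1 n in auto)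
    moreover have "real n * (max 0 u) ^ (n - 1) = 0"
      using 1 n by (simp add: power_0_left)
    ultimately show ?thesis by metis
  next
    case 2
    have "((\<lambda>u. u ^ n) has_real_derivative real n * u ^ (n - 1)) (at u)"
      using DERIV_pow[of n u] by simp
    then have "((\<lambda>u. (max 0 u) ^ n) has_real_derivative real n * u ^ (n - 1)) (at u)"
      by (rule has_field_derivative_transform_within_open[where S="{0<..}"]) (use 2 in auto)
    then show ?thesis using 2 by simp
  next
    case 3
    have "((\<lambda>h::real. ((max 0 h) ^ n - (max 0 0) ^ n) / h) \<longlongrightarrow> 0) (at 0)"
    proof (rule Lim_null_comparison)
      have "\<bar>(max 0 h) ^ n / h\<bar> \<le> \<bar>h\<bar> ^ (n - 1)" for h :: real
      proof -
        have "\<bar>max 0 h\<bar> ^ n \<le> \<bar>h\<bar> ^ n" by (rule power_mono) auto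
        also have "\<dots> = \<bar>h\<bar> ^ (n - 1) * \<bar>h\<bar>"
          using n by (simp add: power_Suc2[symmetric])
        finally show ?thesis
          by (cases "h = 0") (auto simp: abs_divide divide_le_eq power_abs)
      qed
      then show "\<forall>\<^sub>F h in at 0. norm (((max 0 h) ^ n - (max 0 0) ^ n) / h) \<le> \<bar>h\<bar> ^ (n - 1)"
        using n by (simp add: power_0_left)
      show "((\<lambda>h::real. \<bar>h\<bar> ^ (n - 1)) \<longlongrightarrow> 0) (at 0)"
        using n by (auto intro!: tendsto_eq_intros)
    qed
    then show ?thesis
      unfolding DERIV_def 3 using n by (simp add: power_0_left)
  qed
qed

lemma has_derivative_pos_part_power_quadratic:
  fixes x x0 :: "'a::real_inner"
  assumes "n \<ge> 2"
  shows "((\<lambda>x. (max 0 (d - (x - x0) \<bullet> (x - x0))) ^ n) has_derivative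
           (\<lambda>h. - 2 * real n * (max 0 (d - (x - x0) \<bullet> (x - x0))) ^ (n - 1) * ((x - x0) \<bullet> h))) (at x)"
proof -
  let ?u = "\<lambda>x. d - (x - x0) \<bullet> (x - x0)"
  have "(?u has_derivative (\<lambda>h. - 2 * ((x - x0) \<bullet> h))) (at x)"
    by (auto intro!: derivative_eq_intros simp: inner_commute)
  from has_derivative_compose[OF this
      has_real_derivative_pos_part_power[OF assms(1), of "?u x", unfolded has_field_derivative_def]]
  show ?thesis by (simp add: algebra_simps)
qed

text \<open>The cube makes \<open>bump x0 d\<close> twice continuously differentiable, as \<^const>\<open>test_fun\<close> demands.\<close>
definition bump :: "pt \<Rightarrow> real \<Rightarrow> pt \<Rightarrow> real" where
  "bump x0 d x = (max 0 (d - (x - x0) \<bullet> (x - x0))) ^ 3"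

definition bump_grad :: "pt \<Rightarrow> real \<Rightarrow> 3 \<Rightarrow> pt \<Rightarrow> real" where
  "bump_grad x0 d i x = - 6 * (max 0 (d - (x - x0) \<bullet> (x - x0))) ^ 2 * (x $ i - x0 $ i)"

definition bump_hess :: "pt \<Rightarrow> real \<Rightarrow> 3 \<Rightarrow> 3 \<Rightarrow> pt \<Rightarrow> real" where
  "bump_hess x0 d i j x =
     24 * max 0 (d - (x - x0) \<bullet> (x - x0)) * (x $ j - x0 $ j) * (x $ i - x0 $ i)
     - 6 * (max 0 (d - (x - x0) \<bullet> (x - x0))) ^ 2 * (if i = j then 1 else 0)"

lemma bump_has_derivative:
  "(bump x0 d has_derivative (\<lambda>h. \<Sum>k\<in>UNIV. h $ k * bump_grad x0 d k x)) (at x)"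
proof -
  have "- 2 * real 3 * m ^ (3 - 1) * ((x - x0) \<bullet> h) = (\<Sum>k\<in>UNIV. h $ k * (- 6 * m ^ 2 * (x $ k - x0 $ k)))"
    for m :: real and h :: pt
    by (simp add: inner_vec_def sum_distrib_left algebra_simps)
  with has_derivative_pos_part_power_quadratic[of 3 d x0 x] show ?thesis
    unfolding bump_def[abs_def] bump_grad_def by simp
qed

lemma bump_grad_has_derivative:
  "(bump_grad x0 d i has_derivative (\<lambda>h. \<Sum>k\<in>UNIV. h $ k * bump_hess x0 d i k x)) (at x)"
proof -
  have "((\<lambda>x. x $ i - x0 $ i) has_derivative (\<lambda>h. h $ i)) (at x)"
    using bounded_linear_imp_has_derivative[OF bounded_linear_vec_nth]
    by (auto intro!: derivative_eq_intros)
  from has_derivative_mult_right[OF has_derivative_mult[OF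
        has_derivative_pos_part_power_quadratic[of 2 d x0 x] this], of "- 6"]
  have "(bump_grad x0 d i has_derivative (\<lambda>h. - 6 * ((max 0 (d - (x - x0) \<bullet> (x - x0))) ^ 2 * h $ i
      + - 2 * real 2 * (max 0 (d - (x - x0) \<bullet> (x - x0))) ^ (2 - 1) * ((x - x0) \<bullet> h) * (x $ i - x0 $ i))))
      (at x)"
    unfolding bump_grad_def[abs_def] by (simp add: mult.assoc)
  moreover have "- 6 * (m ^ 2 * h $ i + - 2 * real 2 * m ^ (2 - 1) * ((x - x0) \<bullet> h) * (x $ i - x0 $ i))
      = (\<Sum>k\<in>UNIV. h $ k * (24 * m * (x $ k - x0 $ k) * (x $ i - x0 $ i)
                            - 6 * m ^ 2 * (if i = k then 1 else 0)))"
    for m :: real and h :: pt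
  proof -
    have "(\<Sum>k\<in>UNIV. h $ k * (24 * m * (x $ k - x0 $ k) * (x $ i - x0 $ i)))
        = 24 * m * (x $ i - x0 $ i) * ((x - x0) \<bullet> h)"
      unfolding inner_vec_def sum_distrib_left by (rule sum.cong) (auto simp: algebra_simps)
    moreover have "(\<Sum>k\<in>UNIV. h $ k * (6 * m ^ 2 * (if i = k then 1 else 0))) = 6 * m ^ 2 * h $ i"
      by (simp add: if_distrib[of "\<lambda>a. _ * a"] cong: if_cong)
    ultimately have "(\<Sum>k\<in>UNIV. h $ k * (24 * m * (x $ k - x0 $ k) * (x $ i - x0 $ i)
          - 6 * m ^ 2 * (if i = k then 1 else 0)))
        = 24 * m * (x $ i - x0 $ i) * ((x - x0) \<bullet> h) - 6 * m ^ 2 * h $ i"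
      by (simp only: right_diff_distrib sum_subtractf)
    moreover have "- 6 * (m ^ 2 * h $ i + - 2 * real 2 * m ^ (2 - 1) * a * c)
        = 24 * m * c * a - 6 * m ^ 2 * h $ i"
      for a c :: real
      by (simp add: algebra_simps)
    ultimately show ?thesis by (simp only:)
  qed
  ultimately show ?thesis unfolding bump_hess_def by simp
qed

lemma pd_bump: "pd i (bump x0 d) = bump_grad x0 d i"
  using pd_eq_gradient[OF bump_has_derivative] by blast

lemma pd_bump_grad: "pd j (bump_grad x0 d i) = bump_hess x0 d i j"
  using pd_eq_gradient[OF bump_grad_has_derivative] by blast

lemma pos_part_quadratic_eq_0:
  assumes "x \<notin> cball x0 (sqrt d)"
  shows "max 0 (d - (x - x0) \<bullet> (x - x0)) = 0"
proof -
  have "sqrt d < norm (x - x0)"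
    using assms by (simp add: dist_norm norm_minus_commute)
  have "d \<le> (norm (x - x0))\<^sup>2"
  proof (cases "d \<le> 0")
    case False
    then have "d = (sqrt d)\<^sup>2" by simp
    also have "\<dots> \<le> (norm (x - x0))\<^sup>2"
      using \<open>sqrt d < norm (x - x0)\<close> False by (intro power_mono) auto
    finally show ?thesis .
  qed (meson order.trans zero_le_power2)
  then show ?thesis by (simp add: power2_norm_eq_inner)
qed

lemma
  assumes "x \<notin> cball x0 (sqrt d)"
  shows bump_eq_0: "bump x0 d x = 0"
    and bump_grad_eq_0: "bump_grad x0 d i x = 0"
    and bump_hess_eq_0: "bump_hess x0 d i j x = 0"
  unfolding bump_def bump_grad_def bump_hess_def pos_part_quadratic_eq_0[OF assms] by simp_all

lemma continuous_on_bump: "continuous_on UNIV (bump x0 d)"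
  and continuous_on_bump_grad: "continuous_on UNIV (bump_grad x0 d i)"
  and continuous_on_bump_hess: "continuous_on UNIV (bump_hess x0 d i j)"
  unfolding bump_def[abs_def] bump_grad_def[abs_def] bump_hess_def[abs_def]
  by (auto intro!: continuous_intros)

lemma bump_nonneg: "0 \<le> bump x0 d x"
  unfolding bump_def by simp

lemma bump_le: "bump x0 d x \<le> \<bar>d\<bar> ^ 3"
proof -
  have "max 0 (d - (x - x0) \<bullet> (x - x0)) \<le> \<bar>d\<bar>"
    using inner_ge_zero[of "x - x0"] by linarith
  then show ?thesis unfolding bump_def by (intro power_mono) auto
qed

lemma bump_bounded_measurable:
  "bump x0 d \<in> borel_measurable borel" "\<bar>bump x0 d y\<bar> \<le> \<bar>d\<bar> ^ 3"
  using borel_measurable_continuous_onI[OF continuous_on_bump] bump_le bump_nonneg by auto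

lemma
  assumes "continuous_on UNIV h"
  shows integrable_mult_bump: "integrable lborel (\<lambda>x. h x * bump x0 d x)"
    and integrable_mult_bump_grad: "integrable lborel (\<lambda>x. h x * bump_grad x0 d i x)"
    and integrable_mult_bump_hess: "integrable lborel (\<lambda>x. h x * bump_hess x0 d i j x)"
  by (auto intro!: integrable_continuous_compact_support[OF _ compact_cball[of x0 "sqrt d"]]
      continuous_intros assms continuous_on_bump continuous_on_bump_grad continuous_on_bump_hess
      simp: bump_eq_0 bump_grad_eq_0 bump_hess_eq_0)

text \<open>The fundamental lemma of the calculus of variations, with bumps as test functions:
  if \<open>H x \<noteq> 0\<close>, then \<open>sgn (H x) * H\<close> is positive on a ball around \<open>x\<close>, and a bump supported
  in that ball has positive integral against it.\<close>
lemma bump_orthogonal_imp_eq_0: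
  fixes H :: "pt \<Rightarrow> real"
  assumes Hc: "continuous_on UNIV H"
    and Hz: "\<And>x0 d. d > 0 \<Longrightarrow> (\<integral>x. H x * bump x0 d x \<partial>lborel) = 0"
  shows "H x = 0"
proof (rule ccontr)
  assume Hx: "H x \<noteq> 0"
  let ?s = "sgn (H x)"
  have "((\<lambda>y. ?s * H y) \<longlongrightarrow> ?s * H x) (at x)"
    using Hc by (auto intro!: tendsto_intros simp: continuous_on_def)
  moreover have "0 < ?s * H x"
    using Hx by (simp add: sgn_mult_self_eq[symmetric] sgn_real_def)
  ultimately have "\<forall>\<^sub>F y in at x. 0 < ?s * H y"
    by (rule order_tendstoD)
  then obtain e where e: "e > 0" and near: "\<And>y. y \<noteq> x \<Longrightarrow> dist y x < e \<Longrightarrow> 0 < ?s * H y"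
    unfolding eventually_at by blast
  have pos: "0 < ?s * H y" if "dist y x < e" for y
    using near[OF _ that] \<open>0 < ?s * H x\<close> by (cases "y = x") auto
  define r where "r = e / 2"
  have r: "0 < r" "r < e" "sqrt (r\<^sup>2) = r"
    using e unfolding r_def by auto
  define f where "f y = ?s * H y * bump x (r\<^sup>2) y" for y
  have f_nonneg: "0 \<le> f y" for y
  proof (cases "y \<in> cball x r")
    case True
    then show ?thesis
      using pos[of y] r bump_nonneg[of x "r\<^sup>2" y] by (simp add: f_def dist_commute)
  next
    case False
    then show ?thesis
      using bump_eq_0[of y x "r\<^sup>2"] r by (simp add: f_def)
  qed
  have f_cont: "continuous_on UNIV f"
    unfolding f_def[abs_def] by (intro continuous_intros Hc continuous_on_bump)
  have "integrable lborel f"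
    unfolding f_def by (intro integrable_mult_bump continuous_intros Hc)
  moreover have "integral\<^sup>L lborel f = 0"
    using Hz[of "r\<^sup>2" x] r by (simp add: f_def[abs_def] mult.assoc)
  ultimately have "f x = 0"
    by (rule continuous_nonneg_integral_eq_0_imp_eq_0[OF f_cont _ f_nonneg])
  moreover have "0 < f x"
    using \<open>0 < ?s * H x\<close> r by (simp add: f_def bump_def)
  ultimately show False by simp
qed

section \<open>Time derivatives\<close>

lemma tder_has_real_derivative:
  assumes "\<exists>D. ((\<lambda>s. f x s) has_real_derivative D) (at t within T)"
  shows "((\<lambda>s. f x s) has_real_derivative tder T f x t) (at t within T)"
  unfolding tder_def using someI_ex[OF assms] .

lemma tder_eq:
  assumes "a < b" "t \<in> {a..b}" "((\<lambda>s. f x s) has_real_derivative D) (at t within {a..b})"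
  shows "tder {a..b} f x t = D"
proof -
  have "((\<lambda>s. f x s) has_real_derivative tder {a..b} f x t) (at t within {a..b})"
    using assms(3) by (intro tder_has_real_derivative) blast
  from has_field_derivative_unique[OF this assms(3)] show ?thesis
    using assms(1,2) by (simp add: trivial_limit_within)
qed

lemma test_fun_bump:
  assumes "a < b"
  shows "test_fun {a..b} (\<lambda>x t. bump x0 d x)"
proof -
  have pd1: "pd i (\<lambda>y. bump x0 d y) = bump_grad x0 d i" for i
    using pd_bump[of i x0 d] by (simp add: eta_contract_eq)
  have tder0: "tder {a..b} (\<lambda>x t. bump x0 d x) x t = 0" if "t \<in> {a..b}" for x t
    by (rule tder_eq[OF assms that]) simp
  have "C1x {a..b} (\<lambda>x t. bump x0 d x)"
    unfolding C1x_def pd1 using bump_has_derivative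
    by (auto intro!: continuous_on_case_prod_fst continuous_on_bump continuous_on_bump_grad
        simp: differentiable_def)
  moreover have "continuous_on (UNIV \<times> {a..b}) (\<lambda>(x, t). tder {a..b} (\<lambda>x t. bump x0 d x) x t)"
    by (rule continuous_on_cong[THEN iffD1, OF refl _ continuous_on_const[of _ 0]]) (auto simp: tder0)
  moreover have "bump_grad x0 d i differentiable (at x)" for i x
    using bump_grad_has_derivative unfolding differentiable_def by blast
  ultimately have "C21 {a..b} (\<lambda>x t. bump x0 d x)"
    unfolding C21_def pd1 pd_bump_grad
    by (auto intro!: continuous_on_case_prod_fst continuous_on_bump_hess exI[of _ 0])
  then show ?thesis
    unfolding test_fun_def using bump_eq_0 by (blast intro: compact_cball)
qed

lemma gen_bump:
  assumes "a < b" "t \<in> {a..b}"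
  shows "gen {a..b} \<sigma> \<nu> v (\<lambda>x t. bump x0 d x) x t
    = (\<Sum>i\<in>UNIV. v x t $ i * bump_grad x0 d i x) + \<sigma> * \<nu> * (\<Sum>i\<in>UNIV. bump_hess x0 d i i x)"
proof -
  have "tder {a..b} (\<lambda>x t. bump x0 d x) x t = 0"
    by (rule tder_eq[OF assms]) simp
  then show ?thesis
    unfolding gen_def lap_def by (simp add: pd_bump pd_bump_grad)
qed

text \<open>The compact support of \<open>\<phi>\<close> reduces this to the Leibniz rule on a box.\<close>
lemma has_real_derivative_integral_compact_support:
  fixes \<rho> \<rho>' :: "'a::euclidean_space \<Rightarrow> real \<Rightarrow> real" and \<phi> :: "'a \<Rightarrow> real"
  assumes t: "t \<in> {a..b}"
    and \<rho>_cont: "continuous_on (UNIV \<times> {a..b}) (\<lambda>(x, t). \<rho> x t)"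
    and \<rho>': "\<And>x s. s \<in> {a..b} \<Longrightarrow> ((\<lambda>s. \<rho> x s) has_real_derivative \<rho>' x s) (at s within {a..b})"
    and \<rho>'_cont: "continuous_on (UNIV \<times> {a..b}) (\<lambda>(x, t). \<rho>' x t)"
    and \<phi>: "continuous_on UNIV \<phi>" "compact K" "\<And>x. x \<notin> K \<Longrightarrow> \<phi> x = 0"
  shows "((\<lambda>s. \<integral>x. \<rho> x s * \<phi> x \<partial>lborel) has_real_derivative (\<integral>x. \<rho>' x t * \<phi> x \<partial>lborel))
           (at t within {a..b})"
proof -
  obtain c :: 'a where Kc: "K \<subseteq> cbox (-c) c"
    using bounded_subset_cbox_symmetric[OF compact_imp_bounded[OF \<phi>(2)]] by blast
  have box: "(\<integral>x. r x s * \<phi> x \<partial>lborel) = integral (cbox (-c) c) (\<lambda>x. r x s * \<phi> x)"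
    if "continuous_on (UNIV \<times> {a..b}) (\<lambda>(x, t). r x t)" "s \<in> {a..b}" for r s
    by (rule integral_lborel_eq_integral_cbox)
       (use continuous_on_space_slice[OF that] \<phi> Kc in \<open>auto intro!: continuous_intros\<close>)
  have "((\<lambda>s. integral (cbox (-c) c) (\<lambda>x. \<rho> x s * \<phi> x)) has_real_derivative
      integral (cbox (-c) c) (\<lambda>x. \<rho>' x t * \<phi> x)) (at t within {a..b})"
  proof (rule leibniz_rule_field_derivative)
    show "((\<lambda>s. \<rho> x s * \<phi> x) has_real_derivative \<rho>' x s * \<phi> x) (at s within {a..b})"
      if "s \<in> {a..b}" for s x
      using \<rho>'[OF that, of x] by (auto intro!: derivative_eq_intros)
    show "(\<lambda>x. \<rho> x s * \<phi> x) integrable_on cbox (-c) c" if "s \<in> {a..b}" for s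
      using continuous_on_mult[OF continuous_on_space_slice[OF \<rho>_cont that] \<phi>(1)]
      by (rule integrable_continuous[OF continuous_on_subset]) simp
    have "continuous_on ({a..b} \<times> cbox (-c) c) (\<lambda>z. (\<lambda>(x, t). \<rho>' x t) (snd z, fst z))"
      by (rule continuous_on_compose2[OF \<rho>'_cont]) (auto intro!: continuous_intros)
    moreover have "continuous_on ({a..b} \<times> cbox (-c) c) (\<lambda>z. \<phi> (snd z))"
      by (rule continuous_on_compose2[OF \<phi>(1)]) (auto intro!: continuous_intros)
    ultimately show "continuous_on ({a..b} \<times> cbox (-c) c) (\<lambda>(s, x). \<rho>' x s * \<phi> x)"
      by (auto dest: continuous_on_mult simp: case_prod_beta)
  qed (use t in auto)
  then show ?thesis
    unfolding box[OF \<rho>'_cont t] has_field_derivative_def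
    by (rule has_derivative_transform_within[of _ _ _ _ 1]) (use t box[OF \<rho>_cont] in auto)
qed

lemma right_difference_quotient_tendsto:
  fixes \<Phi> :: "real \<Rightarrow> real"
  assumes "(\<Phi> has_real_derivative D) (at t within {a..b})" "a \<le> t" "t < b"
  shows "((\<lambda>h. (\<Phi> (t + h) - \<Phi> t) / h) \<longlongrightarrow> D) (at_right 0)"
proof -
  have "(\<Phi> has_real_derivative D) (at t within {t..b})"
    using has_field_derivative_subset[OF assms(1)] assms(2) by auto
  then have "((\<lambda>s. (\<Phi> s - \<Phi> t) / (s - t)) \<longlongrightarrow> D) (at_right t)"
    using at_within_Icc_at_right[OF assms(3)] by (simp add: has_field_derivative_iff)
  then show ?thesis
    unfolding at_right_to_0[of t] filterlim_filtermap by (simp add: add.commute)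
qed

lemma left_difference_quotient_tendsto:
  fixes \<Phi> :: "real \<Rightarrow> real"
  assumes "(\<Phi> has_real_derivative D) (at t within {a..b})" "a < t" "t \<le> b"
  shows "((\<lambda>h. (\<Phi> t - \<Phi> (t - h)) / h) \<longlongrightarrow> D) (at_right 0)"
proof -
  have "(\<Phi> has_real_derivative D) (at t within {a..t})"
    using has_field_derivative_subset[OF assms(1)] assms(3) by auto
  then have "((\<lambda>s. (\<Phi> s - \<Phi> t) / (s - t)) \<longlongrightarrow> D) (at_left t)"
    using at_within_Icc_at_left[OF assms(2)] by (simp add: has_field_derivative_iff)
  moreover have "at_left t = filtermap (\<lambda>h. t - h) (at_right 0)"
    unfolding at_left_minus[of t] at_right_to_0[of "- t"] filtermap_filtermap by (simp add: o_def)
  ultimately have "((\<lambda>h. (\<Phi> (t - h) - \<Phi> t) / (t - h - t)) \<longlongrightarrow> D) (at_right 0)"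
    by (simp add: filterlim_filtermap)
  moreover have "(\<Phi> (t - h) - \<Phi> t) / (t - h - t) = (\<Phi> t - \<Phi> (t - h)) / h" for h
    by (simp add: divide_simps)
  ultimately show ?thesis by (simp only:)
qed

text \<open>Differentiating \<open>\<rho> ln \<rho>\<close> in time and exchanging the time and space integrals.\<close>
lemma entropy_at_diff_eq_integral:
  fixes \<rho> \<rho>' :: "pt \<Rightarrow> real \<Rightarrow> real"
  assumes ab: "a \<le> b"
    and \<rho>_cont: "continuous_on (UNIV \<times> {a..b}) (\<lambda>(x, t). \<rho> x t)"
    and pos: "\<And>x t. t \<in> {a..b} \<Longrightarrow> 0 < \<rho> x t"
    and \<rho>': "\<And>x t. t \<in> {a..b} \<Longrightarrow> ((\<lambda>s. \<rho> x s) has_real_derivative \<rho>' x t) (at t within {a..b})"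
    and \<rho>'_cont: "continuous_on (UNIV \<times> {a..b}) (\<lambda>(x, t). \<rho>' x t)"
    and g: "integrable lborel g"
      "\<And>x t. t \<in> {a..b} \<Longrightarrow> \<bar>\<rho> x t * ln (\<rho> x t)\<bar> \<le> g x"
      "\<And>x t. t \<in> {a..b} \<Longrightarrow> \<bar>\<rho>' x t\<bar> * (1 + \<bar>ln (\<rho> x t)\<bar>) \<le> g x"
  shows "entropy_at \<rho> b - entropy_at \<rho> a = - integral {a..b} (\<lambda>t. \<integral>x. \<rho>' x t * (ln (\<rho> x t) + 1) \<partial>lborel)"
proof -
  let ?K = "\<lambda>x t. \<rho>' x t * (ln (\<rho> x t) + 1)"
  have nz: "\<And>x t. t \<in> {a..b} \<Longrightarrow> \<rho> x t \<noteq> 0"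
    using pos by (metis order_less_irrefl)
  have "continuous_on (UNIV \<times> {a..b}) (\<lambda>z. \<rho>' (fst z) (snd z) * (ln (\<rho> (fst z) (snd z)) + 1))"
    using \<rho>_cont \<rho>'_cont nz by (intro continuous_intros) (auto simp: case_prod_beta)
  then have K_cont: "continuous_on (UNIV \<times> {a..b}) (\<lambda>(x, t). ?K x t)"
    by (simp add: case_prod_beta)
  have K_bound: "\<bar>?K x t\<bar> \<le> g x" if "t \<in> {a..b}" for x t
  proof -
    have "\<bar>?K x t\<bar> \<le> \<bar>\<rho>' x t\<bar> * (1 + \<bar>ln (\<rho> x t)\<bar>)"
      unfolding abs_mult by (rule mult_left_mono) auto
    then show ?thesis using g(3)[OF that, of x] by simp
  qed
  have ftc: "integral {a..b} (?K x) = \<rho> x b * ln (\<rho> x b) - \<rho> x a * ln (\<rho> x a)" for x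
  proof (rule integral_unique[OF fundamental_theorem_of_calculus[OF ab]])
    fix t assume t: "t \<in> {a..b}"
    have "((\<lambda>s. \<rho> x s * ln (\<rho> x s)) has_real_derivative
        \<rho>' x t * ln (\<rho> x t) + \<rho> x t * (\<rho>' x t / \<rho> x t)) (at t within {a..b})"
      using pos[OF t, of x] \<rho>'[OF t, of x] by (auto intro!: derivative_eq_intros)
    then show "((\<lambda>s. \<rho> x s * ln (\<rho> x s)) has_vector_derivative ?K x t) (at t within {a..b})"
      using pos[OF t, of x] by (simp add: has_real_derivative_iff_has_vector_derivative[symmetric] field_simps)
  qed
  have int: "integrable lborel (\<lambda>x. \<rho> x t * ln (\<rho> x t))" if "t \<in> {a..b}" for t
    using continuous_on_space_slice[OF \<rho>_cont that] nz[OF that]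
    by (intro integrable_continuous_dominated[OF g(1)] continuous_intros g(2)[OF that]) auto
  have "integral {a..b} (\<lambda>t. \<integral>x. ?K x t \<partial>lborel) = (\<integral>x. integral {a..b} (?K x) \<partial>lborel)"
    by (rule integral_Icc_integral_lborel_swap[OF ab K_cont g(1) K_bound])
  also have "\<dots> = entropy_at \<rho> a - entropy_at \<rho> b"
    unfolding ftc entropy_at_def using int ab by simp
  finally show ?thesis by simp
qed

section \<open>The diffusion\<close>

definition div_flux :: "(pt \<Rightarrow> real \<Rightarrow> real) \<Rightarrow> (pt \<Rightarrow> real \<Rightarrow> pt) \<Rightarrow> pt \<Rightarrow> real \<Rightarrow> real" where
  "div_flux \<rho> b x t = (\<Sum>i\<in>UNIV. pd i (\<lambda>y. \<rho> y t * b y t $ i) x)"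

locale nelson_diffusion =
  fixes \<rho> :: "pt \<Rightarrow> real \<Rightarrow> real"
    and p :: "real \<Rightarrow> pt \<Rightarrow> real \<Rightarrow> pt \<Rightarrow> real"
    and bp bm :: "pt \<Rightarrow> real \<Rightarrow> pt"
    and \<nu> ta tb :: real
  assumes tab: "ta < tb"
    and rho_pos: "\<forall>t\<in>{ta..tb}. \<forall>x. \<rho> x t > 0"
    and rho_int: "\<forall>t\<in>{ta..tb}. integrable lborel (\<lambda>x. \<rho> x t)"
    and p_meas: "\<forall>s t. ta \<le> s \<and> s < t \<and> t \<le> tb \<longrightarrow>
                    (\<lambda>z. p s (fst z) t (snd z)) \<in> borel_measurable borel"
    and p_dens: "\<forall>s t x. ta \<le> s \<and> s < t \<and> t \<le> tb \<longrightarrow>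
                    (\<forall>y. p s x t y \<ge> 0) \<and> integrable lborel (p s x t) \<and> (\<integral>y. p s x t y \<partial>lborel) = 1"
    and p_rho: "\<forall>s t y. ta \<le> s \<and> s < t \<and> t \<le> tb \<longrightarrow>
                    \<rho> y t = (\<integral>x. \<rho> x s * p s x t y \<partial>lborel)"
    and Dplus: "\<forall>f. test_fun {ta..tb} f \<longrightarrow> (\<forall>t\<in>{ta..<tb}.
                 ((\<lambda>dt. \<integral>\<^sup>+x. ennreal (\<rho> x t *
                     \<bar>(condF p f t dt x - f x t) / dt - gen {ta..tb} 1 \<nu> bp f x t\<bar>) \<partial>lborel)
                   \<longlongrightarrow> 0) (at_right 0))"
    and Dminus: "\<forall>f. test_fun {ta..tb} f \<longrightarrow> (\<forall>t\<in>{ta<..tb}.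
                 ((\<lambda>dt. \<integral>\<^sup>+x. ennreal (\<rho> x t *
                     \<bar>(f x t - condB \<rho> p f t dt x) / dt - gen {ta..tb} (-1) \<nu> bm f x t\<bar>) \<partial>lborel)
                   \<longlongrightarrow> 0) (at_right 0))"
    and rho_smooth: "C21 {ta..tb} \<rho>"
    and bp_smooth: "\<forall>i. C1x {ta..tb} (\<lambda>x t. bp x t $ i)"
    and bm_smooth: "\<forall>i. C1x {ta..tb} (\<lambda>x t. bm x t $ i)"
    and decay: "\<exists>g. integrable lborel g \<and> (\<forall>t\<in>{ta..tb}. \<forall>x.
          \<bar>\<rho> x t * ln (\<rho> x t)\<bar> \<le> g x \<and>
          \<bar>tder {ta..tb} \<rho> x t\<bar> * (1 + \<bar>ln (\<rho> x t)\<bar>) \<le> g x \<and>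
          (\<forall>b\<in>{bp, bm}. \<forall>i.
             \<bar>\<rho> x t * b x t $ i\<bar> * (1 + \<bar>ln (\<rho> x t)\<bar>) \<le> g x \<and>
             \<bar>pd i (\<lambda>y. \<rho> y t) x * b x t $ i + \<rho> x t * pd i (\<lambda>y. b y t $ i) x\<bar>
                * (1 + \<bar>ln (\<rho> x t)\<bar>) \<le> g x \<and>
             \<bar>b x t $ i * pd i (\<lambda>y. \<rho> y t) x\<bar> \<le> g x))"
begin

lemma rho_cont: "continuous_on (UNIV \<times> {ta..tb}) (\<lambda>(x, t). \<rho> x t)"
  and rho_differentiable: "t \<in> {ta..tb} \<Longrightarrow> (\<lambda>y. \<rho> y t) differentiable (at x)"
  and rho_pd_cont: "continuous_on (UNIV \<times> {ta..tb}) (\<lambda>(x, t). pd i (\<lambda>y. \<rho> y t) x)"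
  and rho_tder_cont: "continuous_on (UNIV \<times> {ta..tb}) (\<lambda>(x, t). tder {ta..tb} \<rho> x t)"
  using rho_smooth unfolding C21_def C1x_def by blast+

lemma rho_has_tder:
  "t \<in> {ta..tb} \<Longrightarrow> ((\<lambda>s. \<rho> x s) has_real_derivative tder {ta..tb} \<rho> x t) (at t within {ta..tb})"
  using rho_smooth unfolding C21_def by (blast intro: tder_has_real_derivative)

lemma
  assumes "b \<in> {bp, bm}"
  shows drift_cont: "continuous_on (UNIV \<times> {ta..tb}) (\<lambda>(x, t). b x t $ i)"
    and drift_differentiable: "t \<in> {ta..tb} \<Longrightarrow> (\<lambda>y. b y t $ i) differentiable (at x)"
    and drift_pd_cont: "continuous_on (UNIV \<times> {ta..tb}) (\<lambda>(x, t). pd j (\<lambda>y. b y t $ i) x)"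
  using assms bp_smooth bm_smooth unfolding C1x_def by blast+

lemma rho_positive: "t \<in> {ta..tb} \<Longrightarrow> 0 < \<rho> x t"
  using rho_pos by blast

lemma rho_integrable: "t \<in> {ta..tb} \<Longrightarrow> integrable lborel (\<lambda>x. \<rho> x t)"
  using rho_int by blast

lemma expectation_condF:
  assumes "ta \<le> t" "0 < h" "t + h \<le> tb"
    and \<phi>: "\<phi> \<in> borel_measurable borel" "\<And>y. \<bar>\<phi> y\<bar> \<le> C"
  shows "integrable lborel (\<lambda>x. \<rho> x t * condF p (\<lambda>x _. \<phi> x) t h x)"
    and "(\<integral>x. \<rho> x t * condF p (\<lambda>x _. \<phi> x) t h x \<partial>lborel) = (\<integral>y. \<rho> y (t + h) * \<phi> y \<partial>lborel)"
proof -
  have st: "ta \<le> t \<and> t < t + h \<and> t + h \<le> tb" using assms(1-3) by simp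
  have int: "integrable (lborel \<Otimes>\<^sub>M lborel) (\<lambda>(x, y). \<rho> x t * \<phi> y * p t x (t + h) y)"
    by (rule integrable_kernel_product[OF p_meas[rule_format, OF st] p_dens[rule_format, OF st]
          rho_integrable less_imp_le[OF rho_positive], of t "\<lambda>x y. \<phi> y" C])
       (use st \<phi> in \<open>auto simp flip: borel_prod\<close>)
  have eq: "\<rho> x t * condF p (\<lambda>x _. \<phi> x) t h x = (\<integral>y. \<rho> x t * \<phi> y * p t x (t + h) y \<partial>lborel)" for x
    unfolding condF_def by (simp add: mult.assoc)
  show "integrable lborel (\<lambda>x. \<rho> x t * condF p (\<lambda>x _. \<phi> x) t h x)"
    unfolding eq using lborel_pair.integrable_fst'[OF int] by simp
  have "(\<integral>x. \<rho> x t * condF p (\<lambda>x _. \<phi> x) t h x \<partial>lborel)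
      = (\<integral>y. (\<integral>x. \<rho> x t * \<phi> y * p t x (t + h) y \<partial>lborel) \<partial>lborel)"
    unfolding eq using lborel_pair.Fubini_integral[of "\<lambda>x y. \<rho> x t * \<phi> y * p t x (t + h) y"] int
    by simp
  also have "\<dots> = (\<integral>y. \<rho> y (t + h) * \<phi> y \<partial>lborel)"
  proof (rule Bochner_Integration.integral_cong[OF refl])
    fix y
    have "(\<integral>x. \<rho> x t * \<phi> y * p t x (t + h) y \<partial>lborel) = (\<integral>x. \<phi> y * (\<rho> x t * p t x (t + h) y) \<partial>lborel)"
      by (simp add: ac_simps)
    then show "(\<integral>x. \<rho> x t * \<phi> y * p t x (t + h) y \<partial>lborel) = \<rho> y (t + h) * \<phi> y"
      using p_rho[rule_format, OF st, of y] by simp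
  qed
  finally show "(\<integral>x. \<rho> x t * condF p (\<lambda>x _. \<phi> x) t h x \<partial>lborel) = (\<integral>y. \<rho> y (t + h) * \<phi> y \<partial>lborel)" .
qed

lemma expectation_condB:
  assumes "ta \<le> t - h" "0 < h" "t \<le> tb"
    and \<phi>: "\<phi> \<in> borel_measurable borel" "\<And>y. \<bar>\<phi> y\<bar> \<le> C"
  shows "integrable lborel (\<lambda>x. \<rho> x t * condB \<rho> p (\<lambda>x _. \<phi> x) t h x)"
    and "(\<integral>x. \<rho> x t * condB \<rho> p (\<lambda>x _. \<phi> x) t h x \<partial>lborel) = (\<integral>y. \<rho> y (t - h) * \<phi> y \<partial>lborel)"
proof -
  have st: "ta \<le> t - h \<and> t - h < t \<and> t \<le> tb" using assms(1-3) by simp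
  have "t \<in> {ta..tb}" "t - h \<in> {ta..tb}" using st by auto
  note pos = rho_positive[OF this(1)] rho_positive[OF this(2)]
  have int: "integrable (lborel \<Otimes>\<^sub>M lborel) (\<lambda>(y, x). \<rho> y (t - h) * \<phi> y * p (t - h) y t x)"
    by (rule integrable_kernel_product[OF p_meas[rule_format, OF st] p_dens[rule_format, OF st]
          rho_integrable less_imp_le[OF pos(2)], of "\<lambda>y x. \<phi> y" C])
       (use st \<phi> in \<open>auto simp flip: borel_prod\<close>)
  have eq: "\<rho> x t * condB \<rho> p (\<lambda>x _. \<phi> x) t h x = (\<integral>y. \<rho> y (t - h) * \<phi> y * p (t - h) y t x \<partial>lborel)"
    for x
    unfolding condB_def pback_def using pos(1)[of x]
    by (simp add: field_simps flip: integral_mult_right_zero)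
  show "integrable lborel (\<lambda>x. \<rho> x t * condB \<rho> p (\<lambda>x _. \<phi> x) t h x)"
    unfolding eq using lborel_pair.integrable_snd[OF int] by simp
  have "(\<integral>x. \<rho> x t * condB \<rho> p (\<lambda>x _. \<phi> x) t h x \<partial>lborel)
      = (\<integral>y. (\<integral>x. \<rho> y (t - h) * \<phi> y * p (t - h) y t x \<partial>lborel) \<partial>lborel)"
    unfolding eq using lborel_pair.Fubini_integral[of "\<lambda>y x. \<rho> y (t - h) * \<phi> y * p (t - h) y t x"] int
    by simp
  also have "\<dots> = (\<integral>y. \<rho> y (t - h) * \<phi> y \<partial>lborel)"
    using p_dens[rule_format, OF st] by simp
  finally show "(\<integral>x. \<rho> x t * condB \<rho> p (\<lambda>x _. \<phi> x) t h x \<partial>lborel) = (\<integral>y. \<rho> y (t - h) * \<phi> y \<partial>lborel)" .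
qed

lemma expectation_bump_has_real_derivative:
  "t \<in> {ta..tb} \<Longrightarrow> ((\<lambda>s. \<integral>x. \<rho> x s * bump x0 d x \<partial>lborel) has_real_derivative
      (\<integral>x. tder {ta..tb} \<rho> x t * bump x0 d x \<partial>lborel)) (at t within {ta..tb})"
  by (rule has_real_derivative_integral_compact_support[OF _ rho_cont rho_has_tder rho_tder_cont
        continuous_on_bump compact_cball[of x0 "sqrt d"]]) (auto simp: bump_eq_0)

lemma integrable_gen_bump:
  assumes "t \<in> {ta..tb}" "b \<in> {bp, bm}"
  shows "integrable lborel (\<lambda>x. \<rho> x t * gen {ta..tb} \<sigma> \<nu> b (\<lambda>x t. bump x0 d x) x t)"
proof -
  have "integrable lborel (\<lambda>x. (\<Sum>i\<in>UNIV. (\<rho> x t * b x t $ i) * bump_grad x0 d i x)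
      + (\<Sum>i\<in>UNIV. (\<sigma> * \<nu> * \<rho> x t) * bump_hess x0 d i i x))"
    using continuous_on_space_slice[OF rho_cont assms(1)]
      continuous_on_space_slice[OF drift_cont[OF assms(2)] assms(1)]
    by (intro Bochner_Integration.integrable_add Bochner_Integration.integrable_sum
        integrable_mult_bump_grad integrable_mult_bump_hess continuous_on_mult continuous_on_const)
  then show ?thesis
    unfolding gen_bump[OF tab assms(1)] by (simp add: distrib_left sum_distrib_left ac_simps)
qed

lemma weak_forward_equation:
  assumes t: "t \<in> {ta..<tb}"
  shows "(\<integral>x. \<rho> x t * gen {ta..tb} 1 \<nu> bp (\<lambda>x t. bump x0 d x) x t \<partial>lborel)
       = (\<integral>x. tder {ta..tb} \<rho> x t * bump x0 d x \<partial>lborel)"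
proof -
  define \<Phi> where "\<Phi> s = (\<integral>x. \<rho> x s * bump x0 d x \<partial>lborel)" for s
  define A where "A h x = (condF p (\<lambda>x t. bump x0 d x) t h x - bump x0 d x) / h" for h x
  have tT: "t \<in> {ta..tb}" using t by simp
  have "\<forall>\<^sub>F h in at_right 0. 0 < h \<and> h < tb - t"
    using t by (auto simp: eventually_at_right_field intro!: exI[of _ "tb - t"])
  then have quot: "\<forall>\<^sub>F h in at_right 0. integrable lborel (\<lambda>x. \<rho> x t * A h x)
      \<and> (\<integral>x. \<rho> x t * A h x \<partial>lborel) = (\<Phi> (t + h) - \<Phi> t) / h"
  proof eventually_elim
    case (elim h)
    note condF = expectation_condF[OF _ _ _ bump_bounded_measurable, of t h] 
    have "(\<lambda>x. \<rho> x t * A h x) = (\<lambda>x. (\<rho> x t * condF p (\<lambda>x t. bump x0 d x) t h x - \<rho> x t * bump x0 d x) / h)"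
      unfolding A_def by (simp add: diff_divide_distrib right_diff_distrib)
    moreover have "integrable lborel (\<lambda>x. \<rho> x t * bump x0 d x)"
      by (rule integrable_mult_bump[OF continuous_on_space_slice[OF rho_cont tT]])
    ultimately show ?case
      using condF t elim by (simp add: \<Phi>_def mult.commute)
  qed
  have "((\<lambda>h. \<integral>\<^sup>+x. ennreal (\<rho> x t * \<bar>A h x - gen {ta..tb} 1 \<nu> bp (\<lambda>x t. bump x0 d x) x t\<bar>)
      \<partial>lborel) \<longlongrightarrow> 0) (at_right 0)"
    using Dplus[rule_format, OF test_fun_bump[OF tab] t] by (simp add: A_def)
  then have "((\<lambda>h. \<integral>x. \<rho> x t * A h x \<partial>lborel) \<longlongrightarrow>
      (\<integral>x. \<rho> x t * gen {ta..tb} 1 \<nu> bp (\<lambda>x t. bump x0 d x) x t \<partial>lborel)) (at_right 0)"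
    by (rule tendsto_integral_weighted_L1)
       (use quot integrable_gen_bump[OF tT] rho_positive[OF tT]
         in \<open>auto elim: eventually_mono intro: less_imp_le\<close>)
  then have "((\<lambda>h. (\<Phi> (t + h) - \<Phi> t) / h) \<longlongrightarrow>
      (\<integral>x. \<rho> x t * gen {ta..tb} 1 \<nu> bp (\<lambda>x t. bump x0 d x) x t \<partial>lborel)) (at_right 0)"
    by (rule Lim_transform_eventually) (use quot in \<open>auto elim: eventually_mono\<close>)
  moreover have "((\<lambda>h. (\<Phi> (t + h) - \<Phi> t) / h) \<longlongrightarrow>
      (\<integral>x. tder {ta..tb} \<rho> x t * bump x0 d x \<partial>lborel)) (at_right 0)"
    using right_difference_quotient_tendsto[OF expectation_bump_has_real_derivative[OF tT]] t
    unfolding \<Phi>_def by auto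
  ultimately show ?thesis
    by (rule tendsto_unique[rotated]) simp
qed

lemma weak_backward_equation:
  assumes t: "t \<in> {ta<..tb}"
  shows "(\<integral>x. \<rho> x t * gen {ta..tb} (-1) \<nu> bm (\<lambda>x t. bump x0 d x) x t \<partial>lborel)
       = (\<integral>x. tder {ta..tb} \<rho> x t * bump x0 d x \<partial>lborel)"
proof -
  define \<Phi> where "\<Phi> s = (\<integral>x. \<rho> x s * bump x0 d x \<partial>lborel)" for s
  define A where "A h x = (bump x0 d x - condB \<rho> p (\<lambda>x t. bump x0 d x) t h x) / h" for h x
  have tT: "t \<in> {ta..tb}" using t by simp
  have "\<forall>\<^sub>F h in at_right 0. 0 < h \<and> h < t - ta"
    using t by (auto simp: eventually_at_right_field intro!: exI[of _ "t - ta"])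
  then have quot: "\<forall>\<^sub>F h in at_right 0. integrable lborel (\<lambda>x. \<rho> x t * A h x)
      \<and> (\<integral>x. \<rho> x t * A h x \<partial>lborel) = (\<Phi> t - \<Phi> (t - h)) / h"
  proof eventually_elim
    case (elim h)
    note condB = expectation_condB[OF _ _ _ bump_bounded_measurable, of t h]
    have "(\<lambda>x. \<rho> x t * A h x) = (\<lambda>x. (\<rho> x t * bump x0 d x - \<rho> x t * condB \<rho> p (\<lambda>x t. bump x0 d x) t h x) / h)"
      unfolding A_def by (simp add: diff_divide_distrib right_diff_distrib)
    moreover have "integrable lborel (\<lambda>x. \<rho> x t * bump x0 d x)"
      by (rule integrable_mult_bump[OF continuous_on_space_slice[OF rho_cont tT]])
    ultimately show ?case
      using condB t elim by (simp add: \<Phi>_def mult.commute)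
  qed
  have "((\<lambda>h. \<integral>\<^sup>+x. ennreal (\<rho> x t * \<bar>A h x - gen {ta..tb} (-1) \<nu> bm (\<lambda>x t. bump x0 d x) x t\<bar>)
      \<partial>lborel) \<longlongrightarrow> 0) (at_right 0)"
    using Dminus[rule_format, OF test_fun_bump[OF tab] t] by (simp add: A_def)
  then have "((\<lambda>h. \<integral>x. \<rho> x t * A h x \<partial>lborel) \<longlongrightarrow>
      (\<integral>x. \<rho> x t * gen {ta..tb} (-1) \<nu> bm (\<lambda>x t. bump x0 d x) x t \<partial>lborel)) (at_right 0)"
    by (rule tendsto_integral_weighted_L1)
       (use quot integrable_gen_bump[OF tT] rho_positive[OF tT]
         in \<open>auto elim: eventually_mono intro: less_imp_le\<close>)
  then have "((\<lambda>h. (\<Phi> t - \<Phi> (t - h)) / h) \<longlongrightarrow>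
      (\<integral>x. \<rho> x t * gen {ta..tb} (-1) \<nu> bm (\<lambda>x t. bump x0 d x) x t \<partial>lborel)) (at_right 0)"
    by (rule Lim_transform_eventually) (use quot in \<open>auto elim: eventually_mono\<close>)
  moreover have "((\<lambda>h. (\<Phi> t - \<Phi> (t - h)) / h) \<longlongrightarrow>
      (\<integral>x. tder {ta..tb} \<rho> x t * bump x0 d x \<partial>lborel)) (at_right 0)"
    using left_difference_quotient_tendsto[OF expectation_bump_has_real_derivative[OF tT]] t
    unfolding \<Phi>_def by auto
  ultimately show ?thesis
    by (rule tendsto_unique[rotated]) simp
qed

lemma pd_flux:
  assumes "t \<in> {ta..tb}" "b \<in> {bp, bm}"
  shows "pd i (\<lambda>y. \<rho> y t * b y t $ i) x = pd i (\<lambda>y. \<rho> y t) x * b x t $ i + \<rho> x t * pd i (\<lambda>y. b y t $ i) x"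
  using pd_mult[OF rho_differentiable drift_differentiable] assms by blast

lemma continuous_on_pd_flux:
  assumes "b \<in> {bp, bm}"
  shows "continuous_on (UNIV \<times> {ta..tb}) (\<lambda>(x, t). pd i (\<lambda>y. \<rho> y t * b y t $ i) x)"
proof -
  have "continuous_on (UNIV \<times> {ta..tb}) (\<lambda>z. pd i (\<lambda>y. \<rho> y (snd z)) (fst z))"
    "continuous_on (UNIV \<times> {ta..tb}) (\<lambda>z. b (fst z) (snd z) $ i)"
    "continuous_on (UNIV \<times> {ta..tb}) (\<lambda>z. \<rho> (fst z) (snd z))"
    "continuous_on (UNIV \<times> {ta..tb}) (\<lambda>z. pd i (\<lambda>y. b y (snd z) $ i) (fst z))"
    using rho_pd_cont drift_cont[OF assms] rho_cont drift_pd_cont[OF assms] by (simp_all add: case_prod_beta)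
  then have "continuous_on (UNIV \<times> {ta..tb})
      (\<lambda>z. pd i (\<lambda>y. \<rho> y (snd z)) (fst z) * b (fst z) (snd z) $ i
         + \<rho> (fst z) (snd z) * pd i (\<lambda>y. b y (snd z) $ i) (fst z))"
    by (intro continuous_on_add continuous_on_mult)
  then show ?thesis
    by (rule continuous_on_cong[THEN iffD1, rotated 2]) (auto simp: pd_flux[OF _ assms])
qed

lemma integrable_drift_bump_grad:
  assumes "t \<in> {ta..tb}" "b \<in> {bp, bm}"
  shows "integrable lborel (\<lambda>x. \<rho> x t * (\<Sum>i\<in>UNIV. b x t $ i * bump_grad x0 d i x))"
proof -
  have "integrable lborel (\<lambda>x. \<Sum>i\<in>UNIV. (\<rho> x t * b x t $ i) * bump_grad x0 d i x)"
    using continuous_on_space_slice[OF rho_cont assms(1)]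
      continuous_on_space_slice[OF drift_cont[OF assms(2)] assms(1)]
    by (intro Bochner_Integration.integrable_sum integrable_mult_bump_grad continuous_on_mult)
  then show ?thesis by (simp add: sum_distrib_left mult.assoc)
qed

lemma continuous_on_div_flux:
  "b \<in> {bp, bm} \<Longrightarrow> continuous_on (UNIV \<times> {ta..tb}) (\<lambda>(x, t). div_flux \<rho> b x t)"
  unfolding div_flux_def case_prod_beta
  using continuous_on_pd_flux[unfolded case_prod_beta] by (intro continuous_on_sum) blast

lemma integral_div_flux_bump:
  assumes t: "t \<in> {ta..tb}" and b: "b \<in> {bp, bm}"
  shows "(\<integral>x. div_flux \<rho> b x t * bump x0 d x \<partial>lborel)
       = - (\<integral>x. \<rho> x t * (\<Sum>i\<in>UNIV. b x t $ i * bump_grad x0 d i x) \<partial>lborel)"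
proof -
  let ?J = "\<lambda>i y. \<rho> y t * b y t $ i"
  have J_cont: "continuous_on UNIV (?J i)" for i
    using continuous_on_space_slice[OF rho_cont t] continuous_on_space_slice[OF drift_cont[OF b] t]
    by (intro continuous_on_mult)
  have pdJ_cont: "continuous_on UNIV (pd i (?J i))" for i
    using continuous_on_space_slice[OF continuous_on_pd_flux[OF b] t] .
  have J_diff: "?J i differentiable (at x)" for i x
    using rho_differentiable[OF t] drift_differentiable[OF b t] by (rule differentiable_mult)
  have bump_diff: "bump x0 d differentiable (at x)" for x
    using bump_has_derivative unfolding differentiable_def by blast
  have ibp: "(\<integral>x. ?J i x * bump_grad x0 d i x \<partial>lborel) = - (\<integral>x. pd i (?J i) x * bump x0 d x \<partial>lborel)" for i
    using integral_mult_pd[OF J_diff bump_diff pdJ_cont, of i] J_cont pdJ_cont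
    by (simp add: pd_bump continuous_on_bump_grad integrable_mult_bump integrable_mult_bump_grad)
  have "(\<integral>x. div_flux \<rho> b x t * bump x0 d x \<partial>lborel) = (\<Sum>i\<in>UNIV. \<integral>x. pd i (?J i) x * bump x0 d x \<partial>lborel)"
    unfolding div_flux_def sum_distrib_right
    by (intro Bochner_Integration.integral_sum integrable_mult_bump pdJ_cont)
  also have "\<dots> = - (\<Sum>i\<in>UNIV. \<integral>x. ?J i x * bump_grad x0 d i x \<partial>lborel)"
    by (simp add: ibp sum_negf)
  also have "\<dots> = - (\<integral>x. \<rho> x t * (\<Sum>i\<in>UNIV. b x t $ i * bump_grad x0 d i x) \<partial>lborel)"
    unfolding sum_distrib_left
    by (subst Bochner_Integration.integral_sum)
       (use integrable_mult_bump_grad[OF J_cont] in \<open>simp_all add: mult.assoc\<close>)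
  finally show ?thesis .
qed

text \<open>Averaging the weak forward and backward equations cancels the diffusion terms
  \<open>\<plusminus>\<nu>\<Delta>\<close> and leaves the continuity equation for the current velocity \<open>(b\<^sub>+ + b\<^sub>-)/2\<close>.\<close>
lemma weak_continuity_equation:
  assumes t: "ta < t" "t < tb"
  shows "(\<integral>x. div_flux \<rho> bp x t * bump x0 d x \<partial>lborel) + (\<integral>x. div_flux \<rho> bm x t * bump x0 d x \<partial>lborel)
       = - 2 * (\<integral>x. tder {ta..tb} \<rho> x t * bump x0 d x \<partial>lborel)"
proof -
  have tT: "t \<in> {ta..tb}" using t by simp
  let ?gen = "\<lambda>\<sigma> b x. \<rho> x t * gen {ta..tb} \<sigma> \<nu> b (\<lambda>x t. bump x0 d x) x t"
  let ?drift = "\<lambda>b x. \<rho> x t * (\<Sum>i\<in>UNIV. b x t $ i * bump_grad x0 d i x)"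
  have "?gen 1 bp x + ?gen (-1) bm x = ?drift bp x + ?drift bm x" for x
    unfolding gen_bump[OF tab tT] by (simp add: algebra_simps)
  then have "(\<integral>x. ?drift bp x \<partial>lborel) + (\<integral>x. ?drift bm x \<partial>lborel)
      = (\<integral>x. ?gen 1 bp x \<partial>lborel) + (\<integral>x. ?gen (-1) bm x \<partial>lborel)"
    using integrable_drift_bump_grad[OF tT] integrable_gen_bump[OF tT]
    by (simp flip: Bochner_Integration.integral_add)
  also have "\<dots> = 2 * (\<integral>x. tder {ta..tb} \<rho> x t * bump x0 d x \<partial>lborel)"
    using weak_forward_equation[of t] weak_backward_equation[of t] t by simp
  finally show ?thesis
    by (simp add: integral_div_flux_bump[OF tT])
qed

lemma continuity_equation_interior:
  assumes t: "ta < t" "t < tb"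
  shows "tder {ta..tb} \<rho> x t + (div_flux \<rho> bp x t + div_flux \<rho> bm x t) / 2 = 0"
proof (rule bump_orthogonal_imp_eq_0[where
    H = "\<lambda>x. tder {ta..tb} \<rho> x t + (div_flux \<rho> bp x t + div_flux \<rho> bm x t) / 2"])
  have tT: "t \<in> {ta..tb}" using t by simp
  have cont: "continuous_on UNIV (\<lambda>x. tder {ta..tb} \<rho> x t)"
    "continuous_on UNIV (\<lambda>x. div_flux \<rho> bp x t)" "continuous_on UNIV (\<lambda>x. div_flux \<rho> bm x t)"
    using continuous_on_space_slice[OF rho_tder_cont tT]
      continuous_on_space_slice[OF continuous_on_div_flux tT] by auto
  then show "continuous_on UNIV (\<lambda>x. tder {ta..tb} \<rho> x t + (div_flux \<rho> bp x t + div_flux \<rho> bm x t) / 2)"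
    by (intro continuous_intros) auto
  fix x0 d
  have "(\<lambda>x. (tder {ta..tb} \<rho> x t + (div_flux \<rho> bp x t + div_flux \<rho> bm x t) / 2) * bump x0 d x)
      = (\<lambda>x. tder {ta..tb} \<rho> x t * bump x0 d x
           + (div_flux \<rho> bp x t * bump x0 d x + div_flux \<rho> bm x t * bump x0 d x) / 2)"
    by (simp add: fun_eq_iff field_simps)
  with integrable_mult_bump[OF cont(1)] integrable_mult_bump[OF cont(2)] integrable_mult_bump[OF cont(3)]
  show "(\<integral>x. (tder {ta..tb} \<rho> x t + (div_flux \<rho> bp x t + div_flux \<rho> bm x t) / 2)
      * bump x0 d x \<partial>lborel) = 0"
    using weak_continuity_equation[OF t, of x0 d] by (simp add: Bochner_Integration.integral_add)
qed

lemma continuity_equation: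
  assumes t: "t \<in> {ta..tb}"
  shows "tder {ta..tb} \<rho> x t + (div_flux \<rho> bp x t + div_flux \<rho> bm x t) / 2 = 0"
proof -
  let ?f = "\<lambda>t. tder {ta..tb} \<rho> x t + (div_flux \<rho> bp x t + div_flux \<rho> bm x t) / 2"
  have "continuous_on {ta..tb} ?f"
    using continuous_on_time_slice[OF rho_tder_cont]
      continuous_on_time_slice[OF continuous_on_div_flux[of bp]]
      continuous_on_time_slice[OF continuous_on_div_flux[of bm]]
    by (intro continuous_on_add continuous_on_divide continuous_on_const) auto
  moreover have "?f s = 0" if "s \<in> {ta<..<tb}" for s
    using continuity_equation_interior that by simp
  ultimately show ?thesis
    using continuous_constant_on_closure[of "{ta<..<tb}" ?f 0 t] closure_greaterThanLessThan[OF tab] t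
    by metis
qed

definition envelope :: "pt \<Rightarrow> real" where
  "envelope = (SOME g. integrable lborel g \<and> (\<forall>t\<in>{ta..tb}. \<forall>x.
          \<bar>\<rho> x t * ln (\<rho> x t)\<bar> \<le> g x \<and>
          \<bar>tder {ta..tb} \<rho> x t\<bar> * (1 + \<bar>ln (\<rho> x t)\<bar>) \<le> g x \<and>
          (\<forall>b\<in>{bp, bm}. \<forall>i.
             \<bar>\<rho> x t * b x t $ i\<bar> * (1 + \<bar>ln (\<rho> x t)\<bar>) \<le> g x \<and>
             \<bar>pd i (\<lambda>y. \<rho> y t) x * b x t $ i + \<rho> x t * pd i (\<lambda>y. b y t $ i) x\<bar>
                * (1 + \<bar>ln (\<rho> x t)\<bar>) \<le> g x \<and>
             \<bar>b x t $ i * pd i (\<lambda>y. \<rho> y t) x\<bar> \<le> g x)))"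

lemma integrable_envelope: "integrable lborel envelope"
  using someI_ex[OF decay, folded envelope_def] by blast

lemma
  assumes "t \<in> {ta..tb}"
  shows entropy_density_le_envelope: "\<bar>\<rho> x t * ln (\<rho> x t)\<bar> \<le> envelope x"
    and tder_le_envelope: "\<bar>tder {ta..tb} \<rho> x t\<bar> * (1 + \<bar>ln (\<rho> x t)\<bar>) \<le> envelope x"
  using someI_ex[OF decay, folded envelope_def] assms by blast+

lemma
  assumes "t \<in> {ta..tb}" "b \<in> {bp, bm}"
  shows flux_le_envelope: "\<bar>\<rho> x t * b x t $ i\<bar> * (1 + \<bar>ln (\<rho> x t)\<bar>) \<le> envelope x"
    and pd_flux_le_envelope: "\<bar>pd i (\<lambda>y. \<rho> y t) x * b x t $ i + \<rho> x t * pd i (\<lambda>y. b y t $ i) x\<bar>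
           * (1 + \<bar>ln (\<rho> x t)\<bar>) \<le> envelope x"
    and drift_pd_rho_le_envelope: "\<bar>b x t $ i * pd i (\<lambda>y. \<rho> y t) x\<bar> \<le> envelope x"
  using someI_ex[OF decay, folded envelope_def] assms by blast+

lemma integral_div_flux_mult_ln:
  assumes t: "t \<in> {ta..tb}" and b: "b \<in> {bp, bm}"
  shows "integrable lborel (\<lambda>x. div_flux \<rho> b x t * (ln (\<rho> x t) + 1))"
    and "integrable lborel (\<lambda>x. \<rho> x t * divg b x t)"
    and "(\<integral>x. div_flux \<rho> b x t * (ln (\<rho> x t) + 1) \<partial>lborel) = (\<integral>x. \<rho> x t * divg b x t \<partial>lborel)"
proof -
  note flux = integral_pd_flux_mult_ln[OF rho_differentiable[OF t] rho_positive[OF t]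
      continuous_on_space_slice[OF rho_pd_cont t] drift_differentiable[OF b t]
      continuous_on_space_slice[OF drift_pd_cont[OF b] t] integrable_envelope
      flux_le_envelope[OF t b] pd_flux_le_envelope[OF t b] drift_pd_rho_le_envelope[OF t b]]
  have eq: "div_flux \<rho> b x t * (ln (\<rho> x t) + 1)
      = (\<Sum>i\<in>UNIV. pd i (\<lambda>y. \<rho> y t * b y t $ i) x * (ln (\<rho> x t) + 1))" for x
    unfolding div_flux_def by (simp add: sum_distrib_right)
  have eq': "\<rho> x t * divg b x t = (\<Sum>i\<in>UNIV. \<rho> x t * pd i (\<lambda>y. b y t $ i) x)" for x
    unfolding divg_def by (simp add: sum_distrib_left)
  show "integrable lborel (\<lambda>x. div_flux \<rho> b x t * (ln (\<rho> x t) + 1))"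
    unfolding eq using flux(1) by simp
  show "integrable lborel (\<lambda>x. \<rho> x t * divg b x t)"
    unfolding eq' using flux(2) by simp
  show "(\<integral>x. div_flux \<rho> b x t * (ln (\<rho> x t) + 1) \<partial>lborel) = (\<integral>x. \<rho> x t * divg b x t \<partial>lborel)"
    unfolding eq eq' using flux by simp
qed

text \<open>Substitute the continuity equation for \<open>\<partial>\<^sub>t\<rho>\<close> and integrate by parts.\<close>
lemma entropy_rate:
  assumes t: "t \<in> {ta..tb}"
  shows "(\<integral>x. tder {ta..tb} \<rho> x t * (ln (\<rho> x t) + 1) \<partial>lborel)
       = - 1/2 * (\<integral>x. \<rho> x t * (divg bp x t + divg bm x t) \<partial>lborel)"
proof -
  have "tder {ta..tb} \<rho> x t * (ln (\<rho> x t) + 1)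
      = - 1/2 * (div_flux \<rho> bp x t * (ln (\<rho> x t) + 1) + div_flux \<rho> bm x t * (ln (\<rho> x t) + 1))" for x
  proof -
    have "tder {ta..tb} \<rho> x t = - (div_flux \<rho> bp x t + div_flux \<rho> bm x t) / 2"
      using continuity_equation[OF t, of x] by linarith
    then show ?thesis by (simp only:) (simp add: field_simps)
  qed
  moreover have "\<rho> x t * (divg bp x t + divg bm x t) = \<rho> x t * divg bp x t + \<rho> x t * divg bm x t" for x
    by (simp add: algebra_simps)
  ultimately show ?thesis
    using integral_div_flux_mult_ln[OF t, of bp] integral_div_flux_mult_ln[OF t, of bm]
    by (simp add: Bochner_Integration.integral_add)
qed

lemma entropy_balance:
  "entropy_at \<rho> tb - entropy_at \<rho> ta
     = 1/2 * integral {ta..tb} (\<lambda>t. \<integral>x. \<rho> x t * (divg bp x t + divg bm x t) \<partial>lborel)"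
proof -
  from entropy_at_diff_eq_integral[OF less_imp_le[OF tab] rho_cont rho_positive rho_has_tder rho_tder_cont
      integrable_envelope entropy_density_le_envelope tder_le_envelope]
  have "entropy_at \<rho> tb - entropy_at \<rho> ta
      = - integral {ta..tb} (\<lambda>t. \<integral>x. tder {ta..tb} \<rho> x t * (ln (\<rho> x t) + 1) \<partial>lborel)" .
  also have "\<dots> = - integral {ta..tb} (\<lambda>t. - 1/2 * (\<integral>x. \<rho> x t * (divg bp x t + divg bm x t) \<partial>lborel))"
    by (simp only: entropy_rate cong: integral_cong)
  finally show ?thesis by simp
qed

end

section \<open>The entropy of the path densities\<close>

theorem corollary1p1:
  fixes \<rho> :: "pt \<Rightarrow> real \<Rightarrow> real"
    and p :: "real \<Rightarrow> pt \<Rightarrow> real \<Rightarrow> pt \<Rightarrow> real"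
    and bp bm :: "pt \<Rightarrow> real \<Rightarrow> pt"
    and \<nu> ta tb :: real
  assumes nu: "\<nu> > 0"
    and tab: "ta < tb"
    \<comment> \<open>rho(.,t) is a positive probability density of xi(t)\<close>
    and rho_pos: "\<forall>t\<in>{ta..tb}. \<forall>x. \<rho> x t > 0"
    and rho_int: "\<forall>t\<in>{ta..tb}. integrable lborel (\<lambda>x. \<rho> x t) \<and> (\<integral>x. \<rho> x t \<partial>lborel) = 1"
    \<comment> \<open>Markov transition densities, consistent with rho (Chapman-Kolmogorov)\<close>
    and p_meas: "\<forall>s t. ta \<le> s \<and> s < t \<and> t \<le> tb \<longrightarrow>
                    (\<lambda>z. p s (fst z) t (snd z)) \<in> borel_measurable borel"
    and p_dens: "\<forall>s t x. ta \<le> s \<and> s < t \<and> t \<le> tb \<longrightarrow>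
                    (\<forall>y. p s x t y \<ge> 0) \<and> integrable lborel (p s x t) \<and> (\<integral>y. p s x t y \<partial>lborel) = 1"
    and p_rho: "\<forall>s t y. ta \<le> s \<and> s < t \<and> t \<le> tb \<longrightarrow>
                    \<rho> y t = (\<integral>x. \<rho> x s * p s x t y \<partial>lborel)"
    and p_CK: "\<forall>s t u x z. ta \<le> s \<and> s < t \<and> t < u \<and> u \<le> tb \<longrightarrow>
                    p s x u z = (\<integral>y. p s x t y * p t y u z \<partial>lborel)"
    \<comment> \<open>mean forward / backward derivatives (limits in L^1, as in Nelson's definition)\<close>
    and Dplus: "\<forall>f. test_fun {ta..tb} f \<longrightarrow> (\<forall>t\<in>{ta..<tb}.
                 ((\<lambda>dt. \<integral>\<^sup>+x. ennreal (\<rho> x t *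
                     \<bar>(condF p f t dt x - f x t) / dt - gen {ta..tb} 1 \<nu> bp f x t\<bar>) \<partial>lborel)
                   \<longlongrightarrow> 0) (at_right 0))"
    and Dminus: "\<forall>f. test_fun {ta..tb} f \<longrightarrow> (\<forall>t\<in>{ta<..tb}.
                 ((\<lambda>dt. \<integral>\<^sup>+x. ennreal (\<rho> x t *
                     \<bar>(f x t - condB \<rho> p f t dt x) / dt - gen {ta..tb} (-1) \<nu> bm f x t\<bar>) \<partial>lborel)
                   \<longlongrightarrow> 0) (at_right 0))"
    \<comment> \<open>the identity b_+ - b_- = 2 nu grad ln rho\<close>
    and bdiff: "\<forall>t\<in>{ta..tb}. \<forall>x i. bp x t $ i - bm x t $ i = 2 * \<nu> * pd i (\<lambda>y. ln (\<rho> y t)) x"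
    \<comment> \<open>smoothness\<close>
    and rho_smooth: "C21 {ta..tb} \<rho>"
    and bp_smooth: "\<forall>i. C1x {ta..tb} (\<lambda>x t. bp x t $ i)"
    and bm_smooth: "\<forall>i. C1x {ta..tb} (\<lambda>x t. bm x t $ i)"
    \<comment> \<open>decay: every quantity entering the integrations by parts is dominated,
        uniformly in t, by one integrable function\<close>
    and decay: "\<exists>g. integrable lborel g \<and> (\<forall>t\<in>{ta..tb}. \<forall>x.
          \<bar>\<rho> x t * ln (\<rho> x t)\<bar> \<le> g x \<and>
          \<bar>tder {ta..tb} \<rho> x t\<bar> * (1 + \<bar>ln (\<rho> x t)\<bar>) \<le> g x \<and>
          (\<forall>b\<in>{bp, bm}. \<forall>i.
             \<bar>\<rho> x t * b x t $ i\<bar> * (1 + \<bar>ln (\<rho> x t)\<bar>) \<le> g x \<and>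
             \<bar>pd i (\<lambda>y. \<rho> y t) x * b x t $ i + \<rho> x t * pd i (\<lambda>y. b y t $ i) x\<bar>
                * (1 + \<bar>ln (\<rho> x t)\<bar>) \<le> g x \<and>
             \<bar>b x t $ i * pd i (\<lambda>y. \<rho> y t) x\<bar> \<le> g x))"
  shows "mesh_limit ta tb (\<lambda>n ts. rel_ent n (rho_plus \<rho> p n ts) (rho_minus \<rho> p n ts))
           (entropy_at \<rho> tb - entropy_at \<rho> ta
             - 1/2 * integral {ta..tb} (\<lambda>t. \<integral>x. \<rho> x t * (divg bp x t + divg bm x t) \<partial>lborel))
       \<and> mesh_limit ta tb (\<lambda>n ts. rel_ent n (rho_minus \<rho> p n ts) (rho_plus \<rho> p n ts))
           (entropy_at \<rho> ta - entropy_at \<rho> tb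
             + 1/2 * integral {ta..tb} (\<lambda>t. \<integral>x. \<rho> x t * (divg bp x t + divg bm x t) \<partial>lborel))"
proof -
  interpret nelson_diffusion \<rho> p bp bm \<nu> ta tb
    by unfold_locales (fact tab rho_pos p_meas p_dens p_rho Dplus Dminus rho_smooth bp_smooth
        bm_smooth decay | use rho_int in blast)+
  let ?I = "integral {ta..tb} (\<lambda>t. \<integral>x. \<rho> x t * (divg bp x t + divg bm x t) \<partial>lborel)"
  have "entropy_at \<rho> tb - entropy_at \<rho> ta - 1/2 * ?I = 0"
    and "entropy_at \<rho> ta - entropy_at \<rho> tb + 1/2 * ?I = 0"
    using entropy_balance by simp_all
  moreover have "mesh_limit ta tb (\<lambda>n ts. rel_ent n (rho_plus \<rho> p n ts) (rho_minus \<rho> p n ts)) 0"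
    and "mesh_limit ta tb (\<lambda>n ts. rel_ent n (rho_minus \<rho> p n ts) (rho_plus \<rho> p n ts)) 0"
    using rho_minus_eq_rho_plus[OF _ rho_pos] by (simp_all add: mesh_limit_zero rel_ent_self)
  ultimately show ?thesis by (simp only:)
qed

end
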